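(* Let $\mathcal{P}$ be a radical parametrization in $n$ parameters over a radical tower $\mathbb{T}$ with $m$ radicals, given with a fixed representation as in the context. Then the tower variety $\mathcal{V}_\mathbb{T}\subset\mathbb{C}^{n+m}$ is irreducible and has dimension $n$. Furthermore, $\mathcal{V}_\mathbb{T}=\overline{\pi^*(\mathcal{B}_\mathcal{P})}$.
   Context: Let $\overline{t}=(t_1,\dots,t_n)$. A radical tower $\mathbb{T}$ over $\mathbb{C}(\overline{t})$ is a tower of fields $\mathbb{F}_0=\mathbb{C}(\overline{t})\subseteq\dots\subseteq\mathbb{F}_m$ with $\mathbb{F}_i=\mathbb{F}_{i-1}(\delta_i)$, $\delta_i^{e_i}=\alpha_i\in\mathbb{F}_{i-1}$, $e_i\in\mathbb{N}$. A radical parametrization $\mathcal{P}$ is a tuple $\overline{x}=(x_1,\dots,x_r)$ of elements of $\mathbb{F}_m$, $r>n$, whose Jacobian with respect to $\overline{t}$ (derivations extended to $\mathbb{F}_m$) has rank $n$; the $\delta_i$ are realized as analytic functions $\delta_i(\overline{t})$ by fixing branch values $\delta_i(\overline{t}_0)=a_i$ at some point. The representation consists of polynomials with $x_j=x_{jN}(\overline{t},\overline{\delta})/x_{jD}(\overline{t},\overline{\delta})$, $\overline{\delta}=(\delta_1,\dots,\delta_m)$ (and similarly each $\alpha_i$ written as a quotient of polynomials in $\overline{t},\delta_1,\dots,\delta_{i-1}$). Let $\varphi:\mathbb{C}^n\to\mathbb{C}^{n+m+r}$, $\overline{t}\mapsto(\overline{t},\overline{\delta}(\overline{t}),\overline{x}(\overline{t}))$,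 and $\mathcal{B}_\mathcal{P}=\overline{\mathrm{Im}(\varphi)}$ (Zariski closure), the incidence variety. Let $\psi:\mathbb{C}^n\to\mathbb{C}^{n+m}$, $\overline{t}\mapsto(\overline{t},\overline{\delta}(\overline{t}))$; the tower variety is $\mathcal{V}_\mathbb{T}=\overline{\mathrm{Im}(\psi)}$. The map $\pi^*:\mathcal{B}_\mathcal{P}\to\mathbb{C}^{n+m}$ is the projection $(\overline{t},\overline{\delta},\overline{x})\mapsto(\overline{t},\overline{\delta})$. *)

theory Defs
  imports "HOL-Analysis.Analysis"
begin

text \<open>Points of an affine space with coordinate set I are functions 'i => complex
  vanishing outside I (so C^k is modelled by an index set of cardinality k).\<close>

definition cspace :: "'i set \<Rightarrow> ('i \<Rightarrow> complex) set" where
  "cspace I = {p. \<forall>i. i \<notin> I \<longrightarrow> p i = 0}"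

inductive_set zpoly :: "'i set \<Rightarrow> (('i \<Rightarrow> complex) \<Rightarrow> complex) set" for I where
  zpoly_const: "(\<lambda>_. c) \<in> zpoly I"
| zpoly_var: "i \<in> I \<Longrightarrow> (\<lambda>p. p i) \<in> zpoly I"
| zpoly_add: "f \<in> zpoly I \<Longrightarrow> g \<in> zpoly I \<Longrightarrow> (\<lambda>p. f p + g p) \<in> zpoly I"
| zpoly_mult: "f \<in> zpoly I \<Longrightarrow> g \<in> zpoly I \<Longrightarrow> (\<lambda>p. f p * g p) \<in> zpoly I"

definition zclosed :: "'i set \<Rightarrow> ('i \<Rightarrow> complex) set \<Rightarrow> bool" where
  "zclosed I S \<longleftrightarrow> (\<exists>F. F \<subseteq> zpoly I \<and> S = {p \<in> cspace I. \<forall>f\<in>F. f p = 0})"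

definition zclosure :: "'i set \<Rightarrow> ('i \<Rightarrow> complex) set \<Rightarrow> ('i \<Rightarrow> complex) set" where
  "zclosure I A = \<Inter>{S. zclosed I S \<and> A \<subseteq> S}"

definition zirreducible :: "'i set \<Rightarrow> ('i \<Rightarrow> complex) set \<Rightarrow> bool" where
  "zirreducible I V \<longleftrightarrow> zclosed I V \<and> V \<noteq> {} \<and>
     (\<forall>S1 S2. zclosed I S1 \<and> zclosed I S2 \<and> V \<subseteq> S1 \<union> S2 \<longrightarrow> V \<subseteq> S1 \<or> V \<subseteq> S2)"

definition zchain :: "'i set \<Rightarrow> ('i \<Rightarrow> complex) set \<Rightarrow> nat \<Rightarrow> bool" where
  "zchain I V k \<longleftrightarrow> (\<exists>Z :: nat \<Rightarrow> ('i \<Rightarrow> complex) set.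
     (\<forall>i\<le>k. zirreducible I (Z i) \<and> Z i \<subseteq> V) \<and> (\<forall>i<k. Z i \<subset> Z (Suc i)))"

definition has_zdim :: "'i set \<Rightarrow> ('i \<Rightarrow> complex) set \<Rightarrow> nat \<Rightarrow> bool" where
  "has_zdim I V d \<longleftrightarrow> zchain I V d \<and> \<not> zchain I V (Suc d)"

definition vupd :: "complex ^ 'n \<Rightarrow> 'n \<Rightarrow> complex \<Rightarrow> complex ^ 'n" where
  "vupd t k z = (\<chi> j. if j = k then z else t $ j)"

text \<open>Holomorphic on an open set: continuous and holomorphic in each variable (Osgood).\<close>
definition mholo_on :: "(complex ^ 'n) set \<Rightarrow> (complex ^ 'n \<Rightarrow> complex) \<Rightarrow> bool" where
  "mholo_on U f \<longleftrightarrow> open U \<and> continuous_on U f \<and>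
     (\<forall>t\<in>U. \<forall>k. (\<lambda>z. f (vupd t k z)) field_differentiable at (t $ k))"

definition mpderiv :: "(complex ^ 'n \<Rightarrow> complex) \<Rightarrow> 'n \<Rightarrow> complex ^ 'n \<Rightarrow> complex" where
  "mpderiv f k t = deriv (\<lambda>z. f (vupd t k z)) (t $ k)"

text \<open>Coordinates of C^(n+m): Inl k for t_k (k :: 'n, n = CARD('n)), Inr i for delta_(i+1), i < m.\<close>
definition tower_idx :: "nat \<Rightarrow> ('n + nat) set" where
  "tower_idx m = range Inl \<union> Inr ` {..<m}"

definition psi :: "nat \<Rightarrow> (nat \<Rightarrow> complex ^ 'n \<Rightarrow> complex) \<Rightarrow> complex ^ 'n \<Rightarrow> ('n + nat \<Rightarrow> complex)" where
  "psi m \<delta> t = (\<lambda>c. case c of Inl k \<Rightarrow> t $ k | Inr i \<Rightarrow> if i < m then \<delta> i t else 0)"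

text \<open>Coordinates of C^(n+m+r): Inl a for tower coordinates, Inr j for x_(j+1), j < r.\<close>
definition inc_idx :: "nat \<Rightarrow> nat \<Rightarrow> (('n + nat) + nat) set" where
  "inc_idx m r = Inl ` tower_idx m \<union> Inr ` {..<r}"

definition radpar_x :: "nat \<Rightarrow> (nat \<Rightarrow> complex ^ 'n \<Rightarrow> complex)
    \<Rightarrow> (nat \<Rightarrow> ('n + nat \<Rightarrow> complex) \<Rightarrow> complex) \<Rightarrow> (nat \<Rightarrow> ('n + nat \<Rightarrow> complex) \<Rightarrow> complex)
    \<Rightarrow> nat \<Rightarrow> complex ^ 'n \<Rightarrow> complex" where
  "radpar_x m \<delta> xN xD j t = xN j (psi m \<delta> t) / xD j (psi m \<delta> t)"

definition phi :: "nat \<Rightarrow> nat \<Rightarrow> (nat \<Rightarrow> complex ^ 'n \<Rightarrow> complex)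
    \<Rightarrow> (nat \<Rightarrow> ('n + nat \<Rightarrow> complex) \<Rightarrow> complex) \<Rightarrow> (nat \<Rightarrow> ('n + nat \<Rightarrow> complex) \<Rightarrow> complex)
    \<Rightarrow> complex ^ 'n \<Rightarrow> (('n + nat) + nat \<Rightarrow> complex)" where
  "phi m r \<delta> xN xD t = (\<lambda>c. case c of Inl a \<Rightarrow> psi m \<delta> t a
       | Inr j \<Rightarrow> if j < r then radpar_x m \<delta> xN xD j t else 0)"

definition pistar :: "(('n + nat) + nat \<Rightarrow> complex) \<Rightarrow> ('n + nat \<Rightarrow> complex)" where
  "pistar p = (\<lambda>a. p (Inl a))"

end

theory Submission
  imports Defs "HOL-Library.Function_Algebras" "HOL-Complex_Analysis.Complex_Analysis"
    "HOL-Computational_Algebra.Polynomial"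
begin

(*
  The coordinates of \<psi> are holomorphic on the connected set U, where holomorphic functions
  have no zero divisors; pulling back along \<psi>, neither do the polynomial functions on
  \<psi>(U), so its closure V is irreducible.

  For the dimension, the parameters t are algebraically independent on V (a polynomial vanishing
  on an open set vanishes), and each \<delta>_i is algebraic over them, as a root of
  \<delta>^e \<alpha>D = \<alpha>N. Counting monomials shows that then no n + 1 coordinates are
  algebraically independent on V, while along a strict chain of irreducible closed subsets the
  number of independent coordinates strictly increases; so chains in V have length at most n.
  A chain of length n is given by the closures of the images of polydisc slices in which the
  parameters are released one at a time.

  Finally \<pi>* is a coordinate projection, so it maps the closure of \<phi>(U) into the closure
  of \<pi>*(\<phi>(U)) = \<psi>(U).
*)

section \<open>Polynomial functions and the Zariski topology\<close>

lemma zpoly_mono: "f \<in> zpoly X \<Longrightarrow> X \<subseteq> Y \<Longrightarrow> f \<in> zpoly Y"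
  by (induction rule: zpoly.induct) (auto intro: zpoly.intros)

lemma zpoly_sum: "finite A \<Longrightarrow> (\<And>a. a \<in> A \<Longrightarrow> f a \<in> zpoly X) \<Longrightarrow> (\<lambda>p. \<Sum>a\<in>A. f a p) \<in> zpoly X"
proof (induction A rule: finite_induct)
  case empty then show ?case using zpoly_const[of 0] by simp
next
  case (insert x F) then show ?case using zpoly_add[of "f x" X "\<lambda>p. \<Sum>a\<in>F. f a p"] by simp
qed

lemma zpoly_prod: "finite A \<Longrightarrow> (\<And>a. a \<in> A \<Longrightarrow> f a \<in> zpoly X) \<Longrightarrow> (\<lambda>p. \<Prod>a\<in>A. f a p) \<in> zpoly X"
proof (induction A rule: finite_induct)
  case empty then show ?case using zpoly_const[of 1] by simp
next
  case (insert x F) then show ?case using zpoly_mult[of "f x" X "\<lambda>p. \<Prod>a\<in>F. f a p"] by simp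
qed

lemma zpoly_pow: "f \<in> zpoly X \<Longrightarrow> (\<lambda>p. f p ^ k) \<in> zpoly X"
proof (induction k)
  case 0 then show ?case using zpoly_const[of 1] by simp
next
  case (Suc k) then show ?case using zpoly_mult[of f X "\<lambda>p. f p ^ k"] by simp
qed

lemma zpoly_minus: "f \<in> zpoly X \<Longrightarrow> g \<in> zpoly X \<Longrightarrow> (\<lambda>p. f p - g p) \<in> zpoly X"
proof -
  assume a: "f \<in> zpoly X" "g \<in> zpoly X"
  from zpoly_add[OF a(1) zpoly_mult[OF zpoly_const[of "-1"] a(2)]]
  show ?thesis by simp
qed

lemma zpoly_neg: "f \<in> zpoly X \<Longrightarrow> (\<lambda>p. - f p) \<in> zpoly X"
  using zpoly_minus[OF zpoly.zpoly_const[of 0]] by simp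

lemma zpoly_agree: "f \<in> zpoly X \<Longrightarrow> (\<And>i. i \<in> X \<Longrightarrow> p i = q i) \<Longrightarrow> f p = f q"
  by (induction f rule: zpoly.induct) auto

lemma zpoly_comp: "f \<in> zpoly X \<Longrightarrow> (\<And>i. i \<in> X \<Longrightarrow> g i \<in> zpoly Y) \<Longrightarrow> (\<lambda>p. f (\<lambda>i. g i p)) \<in> zpoly Y"
  by (induction f rule: zpoly.induct) (auto intro: zpoly.intros)

lemma zclosed_vanishing_set: "F \<subseteq> zpoly I \<Longrightarrow> zclosed I {p \<in> cspace I. \<forall>f\<in>F. f p = 0}"
  unfolding zclosed_def by blast

lemma zclosed_subset_cspace: "zclosed I S \<Longrightarrow> S \<subseteq> cspace I"
  unfolding zclosed_def by auto

lemma zclosed_Inter: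
  assumes "\<forall>S\<in>\<S>. zclosed I S"
  shows "zclosed I (\<Inter>\<S> \<inter> cspace I)"
proof -
  have "\<forall>S\<in>\<S>. \<exists>F. F \<subseteq> zpoly I \<and> S = {p \<in> cspace I. \<forall>f\<in>F. f p = 0}"
    using assms unfolding zclosed_def by simp
  from bchoice[OF this] obtain F where F0: "\<forall>S\<in>\<S>. F S \<subseteq> zpoly I \<and> S = {p \<in> cspace I. \<forall>f\<in>F S. f p = 0}"
    ..
  have "\<Inter>\<S> \<inter> cspace I = {p \<in> cspace I. \<forall>f\<in>(\<Union>S\<in>\<S>. F S). f p = 0}"
  proof (intro equalityI subsetI)
    fix p assume p: "p \<in> \<Inter>\<S> \<inter> cspace I"
    have "\<forall>S\<in>\<S>. \<forall>f\<in>F S. f p = 0"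
    proof (intro ballI)
      fix S f assume S: "S \<in> \<S>" and f: "f \<in> F S"
      have "p \<in> S" using p S by simp
      then have "p \<in> {p \<in> cspace I. \<forall>f\<in>F S. f p = 0}" using F0 S by simp
      then show "f p = 0" using f by simp
    qed
    then show "p \<in> {p \<in> cspace I. \<forall>f\<in>(\<Union>S\<in>\<S>. F S). f p = 0}" using p by simp
  next
    fix p assume p: "p \<in> {p \<in> cspace I. \<forall>f\<in>(\<Union>S\<in>\<S>. F S). f p = 0}"
    have "p \<in> S" if S: "S \<in> \<S>" for S
    proof -
      have "p \<in> {p \<in> cspace I. \<forall>f\<in>F S. f p = 0}" using p S by simp
      then show ?thesis using F0 S by simp
    qed
    then show "p \<in> \<Inter>\<S> \<inter> cspace I" using p by simp
  qed
  moreover have "(\<Union>S\<in>\<S>. F S) \<subseteq> zpoly I" using F0 by auto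
  ultimately show ?thesis unfolding zclosed_def by (intro exI conjI)
qed

lemma zclosed_cspace: "zclosed I (cspace I)"
  using zclosed_vanishing_set[of "{}" I] by simp

lemma zclosed_zclosure: assumes "A \<subseteq> cspace I" shows "zclosed I (zclosure I A)"
proof -
  have m: "cspace I \<in> {S. zclosed I S \<and> A \<subseteq> S}" using zclosed_cspace assms by blast
  have "zclosure I A = \<Inter>{S. zclosed I S \<and> A \<subseteq> S} \<inter> cspace I"
    unfolding zclosure_def using Inter_lower[OF m] by blast
  moreover have "zclosed I (\<Inter>{S. zclosed I S \<and> A \<subseteq> S} \<inter> cspace I)"
    by (rule zclosed_Inter) blast
  ultimately show ?thesis by simp
qed

lemma zclosure_superset: "A \<subseteq> zclosure I A"
  unfolding zclosure_def by blast

lemma zclosure_least: "zclosed I S \<Longrightarrow> A \<subseteq> S \<Longrightarrow> zclosure I A \<subseteq> S"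
  unfolding zclosure_def by blast

lemma zclosure_mono: "A \<subseteq> B \<Longrightarrow> zclosure I A \<subseteq> zclosure I B"
  unfolding zclosure_def by blast

lemma zclosure_vanishing:
  assumes "A \<subseteq> cspace I" "g \<in> zpoly I" "\<forall>p\<in>A. g p = 0" "p \<in> zclosure I A"
  shows "g p = 0"
proof -
  have "zclosure I A \<subseteq> {p \<in> cspace I. \<forall>f\<in>{g}. f p = 0}"
    by (rule zclosure_least) (use assms zclosed_vanishing_set[of "{g}" I] in auto)
  then show ?thesis using assms by auto
qed

definition zdomain :: "'i set \<Rightarrow> ('i \<Rightarrow> complex) set \<Rightarrow> bool" where
  "zdomain I A \<longleftrightarrow> (\<forall>g h. g \<in> zpoly I \<longrightarrow> h \<in> zpoly I \<longrightarrow> (\<forall>p\<in>A. g p * h p = 0) \<longrightarrow>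
      (\<forall>p\<in>A. g p = 0) \<or> (\<forall>p\<in>A. h p = 0))"

lemma zirreducible_imp_zdomain: assumes "zirreducible I Z" shows "zdomain I Z"
  unfolding zdomain_def
proof (intro allI impI)
  fix g h assume g: "g \<in> zpoly I" and h: "h \<in> zpoly I" and gh: "\<forall>p\<in>Z. g p * h p = 0"
  have Zc: "Z \<subseteq> cspace I" using assms zclosed_subset_cspace unfolding zirreducible_def by blast
  have "Z \<subseteq> {p \<in> cspace I. \<forall>f\<in>{g}. f p = 0} \<union> {p \<in> cspace I. \<forall>f\<in>{h}. f p = 0}"
    using gh Zc by auto
  moreover have "zclosed I {p \<in> cspace I. \<forall>f\<in>{g}. f p = 0}" "zclosed I {p \<in> cspace I. \<forall>f\<in>{h}. f p = 0}"
    using zclosed_vanishing_set[of "{g}" I] zclosed_vanishing_set[of "{h}" I] g h by auto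
  ultimately show "(\<forall>p\<in>Z. g p = 0) \<or> (\<forall>p\<in>Z. h p = 0)"
    using assms unfolding zirreducible_def by blast
qed

lemma zdomain_imp_zirreducible_zclosure:
  assumes "A \<subseteq> cspace I" "A \<noteq> {}" "zdomain I A"
  shows "zirreducible I (zclosure I A)"
  unfolding zirreducible_def
proof (intro conjI allI impI)
  show "zclosed I (zclosure I A)" by (rule zclosed_zclosure[OF assms(1)])
  show "zclosure I A \<noteq> {}" using assms(2) zclosure_superset by blast
  fix S1 S2 assume cover: "zclosed I S1 \<and> zclosed I S2 \<and> zclosure I A \<subseteq> S1 \<union> S2"
  show "zclosure I A \<subseteq> S1 \<or> zclosure I A \<subseteq> S2"
  proof (rule ccontr)
    assume not_sub: "\<not> (zclosure I A \<subseteq> S1 \<or> zclosure I A \<subseteq> S2)"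
    obtain F1 where F1: "F1 \<subseteq> zpoly I" "S1 = {p \<in> cspace I. \<forall>f\<in>F1. f p = 0}"
      using cover unfolding zclosed_def by blast
    obtain F2 where F2: "F2 \<subseteq> zpoly I" "S2 = {p \<in> cspace I. \<forall>f\<in>F2. f p = 0}"
      using cover unfolding zclosed_def by blast
    have "\<not> A \<subseteq> S1" using not_sub zclosure_least[of I S1 A] cover by meson
    then obtain f1 p1 where f1: "f1 \<in> F1" "p1 \<in> A" "f1 p1 \<noteq> 0" using F1(2) assms(1) by auto
    have "\<not> A \<subseteq> S2" using not_sub zclosure_least[of I S2 A] cover by meson
    then obtain f2 p2 where f2: "f2 \<in> F2" "p2 \<in> A" "f2 p2 \<noteq> 0" using F2(2) assms(1) by auto
    have A_cover: "A \<subseteq> S1 \<union> S2" using cover zclosure_superset[of A I] by (meson subset_trans)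
    have "\<forall>p\<in>A. f1 p * f2 p = 0"
    proof
      fix p assume "p \<in> A"
      then have "p \<in> S1 \<or> p \<in> S2" using A_cover by blast
      then show "f1 p * f2 p = 0" using F1 F2 f1 f2 by auto
    qed
    moreover have "f1 \<in> zpoly I" "f2 \<in> zpoly I" using f1 f2 F1 F2 by auto
    ultimately have "(\<forall>p\<in>A. f1 p = 0) \<or> (\<forall>p\<in>A. f2 p = 0)" using assms(3) unfolding zdomain_def by blast
    then show False using f1 f2 by blast
  qed
qed

section \<open>Holomorphic functions of several variables\<close>

lemma vupd_nth [simp]: "vupd t k z $ j = (if j = k then z else t $ j)"
  unfolding vupd_def by simp

lemma vupd_same [simp]: "vupd t k (t $ k) = t"
  by (simp add: vec_eq_iff)

lemma vupd_vupd [simp]: "vupd (vupd t k z) k w = vupd t k w"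
  by (simp add: vec_eq_iff)

lemma mholo_on_open: "mholo_on U F \<Longrightarrow> open U"
  unfolding mholo_on_def by blast

lemma mholo_on_continuous_on: "mholo_on U F \<Longrightarrow> continuous_on U F"
  unfolding mholo_on_def by blast

lemma mholo_on_field_differentiable:
  "mholo_on U F \<Longrightarrow> t \<in> U \<Longrightarrow> (\<lambda>z. F (vupd t k z)) field_differentiable at (t $ k)"
  unfolding mholo_on_def by blast

lemma mholo_on_const: "open U \<Longrightarrow> mholo_on U (\<lambda>_. c)"
  unfolding mholo_on_def by auto

lemma mholo_on_component: "open U \<Longrightarrow> mholo_on U (\<lambda>t. t $ j)"
  unfolding mholo_on_def
proof (intro conjI ballI allI)
  fix t :: "complex ^ 'a" and k
  show "(\<lambda>z. vupd t k z $ j) field_differentiable at (t $ k)"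
    by (cases "j = k") (simp_all add: field_differentiable_ident field_differentiable_const)
qed (auto intro: continuous_intros)

lemma mholo_on_add: "mholo_on U F \<Longrightarrow> mholo_on U G \<Longrightarrow> mholo_on U (\<lambda>t. F t + G t)"
  unfolding mholo_on_def by (auto intro!: continuous_intros field_differentiable_add)

lemma mholo_on_mult: "mholo_on U F \<Longrightarrow> mholo_on U G \<Longrightarrow> mholo_on U (\<lambda>t. F t * G t)"
  unfolding mholo_on_def by (auto intro!: continuous_intros field_differentiable_mult)

lemma mholo_on_zpoly:
  assumes "open U" "f \<in> zpoly X" "\<And>c. c \<in> X \<Longrightarrow> mholo_on U (\<lambda>t. \<phi> t c)"
  shows "mholo_on U (\<lambda>t. f (\<phi> t))"
  using assms(2,3)
proof (induction rule: zpoly.induct)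
  case (zpoly_const c) show ?case by (rule mholo_on_const[OF assms(1)])
next
  case (zpoly_var i) then show ?case by simp
next
  case (zpoly_add f g) then show ?case by (simp add: mholo_on_add)
next
  case (zpoly_mult f g) then show ?case by (simp add: mholo_on_mult)
qed

text \<open>Polydiscs are more convenient than balls here: they are products of discs, so the
  identity theorem can be proved one coordinate at a time.\<close>

definition polydisc :: "complex ^ 'n \<Rightarrow> real \<Rightarrow> (complex ^ 'n) set" where
  "polydisc a r = {t. \<forall>j. dist (a $ j) (t $ j) < r}"

definition polydisc_slice :: "complex ^ 'n \<Rightarrow> real \<Rightarrow> complex ^ 'n \<Rightarrow> 'n set \<Rightarrow> (complex ^ 'n) set" where
  "polydisc_slice a r c J =
     {t. \<forall>j. (j \<in> J \<longrightarrow> dist (a $ j) (t $ j) < r) \<and> (j \<notin> J \<longrightarrow> t $ j = c $ j)}"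

lemma polydisc_slice_subset: "c \<in> polydisc a r \<Longrightarrow> polydisc_slice a r c J \<subseteq> polydisc a r"
  unfolding polydisc_slice_def polydisc_def by (auto, metis)

lemma polydisc_slice_UNIV: "polydisc_slice a r c UNIV = polydisc a r"
  unfolding polydisc_slice_def polydisc_def by auto

lemma polydisc_slice_mono: "r > 0 \<Longrightarrow> J \<subseteq> J' \<Longrightarrow> polydisc_slice a r a J \<subseteq> polydisc_slice a r a J'"
  unfolding polydisc_slice_def by (smt (verit) dist_self mem_Collect_eq subset_iff)

lemma center_in_polydisc: "r > 0 \<Longrightarrow> a \<in> polydisc a r"
  unfolding polydisc_def by simp

lemma ball_subset_polydisc: "ball a r \<subseteq> polydisc a r"
  unfolding polydisc_def ball_def using dist_vec_nth_le le_less_trans by blast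

lemma dist_le_sum_cart: "dist (x :: complex ^ 'n) y \<le> (\<Sum>i\<in>UNIV. dist (x $ i) (y $ i))"
  unfolding dist_norm norm_vec_def
  by (rule order_trans[OF L2_set_le_sum]) (auto)

lemma polydisc_subset_ball:
  assumes "r > 0"
  shows "polydisc a (r / real CARD('n)) \<subseteq> ball (a :: complex ^ 'n) r"
proof
  fix t assume "t \<in> polydisc a (r / real CARD('n))"
  then have d: "\<And>j. dist (a $ j) (t $ j) < r / real CARD('n)" unfolding polydisc_def by auto
  have "dist a t \<le> (\<Sum>i\<in>UNIV. dist (a $ i) (t $ i))" by (rule dist_le_sum_cart)
  also have "\<dots> < (\<Sum>i\<in>(UNIV::'n set). r / real CARD('n))"
    by (rule sum_strict_mono) (use d in auto)
  also have "\<dots> = r" by simp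
  finally show "t \<in> ball a r" by simp
qed

lemma open_contains_polydisc:
  assumes "open U" "t \<in> U"
  obtains r where "r > 0" "polydisc t r \<subseteq> U"
proof -
  obtain e where e: "e > 0" "ball t e \<subseteq> U" using assms open_contains_ball by blast
  then have "polydisc t (e / real CARD('a)) \<subseteq> U" using polydisc_subset_ball[OF e(1), of t] by blast
  moreover have "e / real CARD('a) > 0" using e(1) by simp
  ultimately show ?thesis using that by blast
qed

text \<open>Identity theorem on a slice of a polydisc, by induction on the free coordinates: a
  function vanishing near b vanishes on each one-variable disc through a point near b, by the
  one-variable identity theorem, hence (induction hypothesis) on each sub-slice through it.\<close>

lemma identity_theorem_polydisc_slice:
  fixes F :: "complex ^ 'n \<Rightarrow> complex"
  assumes sub: "polydisc a r \<subseteq> U" and F: "mholo_on U F" and \<rho>: "\<rho> > 0"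
    and c: "c \<in> polydisc a r" and b: "b \<in> polydisc_slice a r c J"
    and near: "\<forall>t\<in>polydisc_slice a r c J. (\<forall>j\<in>J. dist (b $ j) (t $ j) < \<rho>) \<longrightarrow> F t = 0"
  shows "\<forall>t\<in>polydisc_slice a r c J. F t = 0"
  using finite[of J] c b near
proof (induction J arbitrary: c b rule: finite_induct)
  case empty
  then show ?case by auto
next
  case (insert j J)
  show ?case
  proof
    fix t assume t: "t \<in> polydisc_slice a r c (insert j J)"
    have slice: "\<forall>t'\<in>polydisc_slice a r (vupd c j s) J. F t' = 0"
      if s: "dist (a $ j) s < r" "dist (b $ j) s < \<rho>" for s
    proof (rule insert.IH)
      show "vupd c j s \<in> polydisc a r" using insert.prems(1) s unfolding polydisc_def by auto
      show "vupd b j s \<in> polydisc_slice a r (vupd c j s) J"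
        using insert.prems(2) s insert.hyps(2) unfolding polydisc_slice_def by auto
      show "\<forall>t'\<in>polydisc_slice a r (vupd c j s) J. (\<forall>i\<in>J. dist (vupd b j s $ i) (t' $ i) < \<rho>) \<longrightarrow> F t' = 0"
      proof (intro ballI impI)
        fix t' assume t': "t' \<in> polydisc_slice a r (vupd c j s) J"
          and d: "\<forall>i\<in>J. dist (vupd b j s $ i) (t' $ i) < \<rho>"
        have "t' \<in> polydisc_slice a r c (insert j J)"
          using t' s insert.hyps(2) unfolding polydisc_slice_def by auto
        moreover have "t' $ j = s" using t' insert.hyps(2) unfolding polydisc_slice_def by auto
        then have "\<forall>i\<in>insert j J. dist (b $ i) (t' $ i) < \<rho>"
          using d s insert.hyps(2) by (auto split: if_splits)
        ultimately show "F t' = 0" using insert.prems(3) by blast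
      qed
    qed
    have tU: "vupd t j z \<in> U" if "z \<in> ball (a $ j) r" for z
    proof -
      have "t \<in> polydisc a r" using polydisc_slice_subset[OF insert.prems(1)] t by blast
      then have "vupd t j z \<in> polydisc a r" using that unfolding polydisc_def by auto
      then show ?thesis using sub by blast
    qed
    have hol: "(\<lambda>z. F (vupd t j z)) holomorphic_on ball (a $ j) r"
      unfolding holomorphic_on_def
      using mholo_on_field_differentiable[OF F tU, of _ j]
      by (auto intro: field_differentiable_at_within)
    have bj: "b $ j \<in> ball (a $ j) r" using insert.prems(2) unfolding polydisc_slice_def by auto
    have "F (vupd t j (t $ j)) = 0"
    proof (rule analytic_continuation[OF hol])
      show "b $ j islimpt ball (a $ j) r \<inter> ball (b $ j) \<rho>"
        by (rule open_imp_islimpt) (use bj \<rho> in auto)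
      show "t $ j \<in> ball (a $ j) r" using t unfolding polydisc_slice_def by auto
      fix z assume z: "z \<in> ball (a $ j) r \<inter> ball (b $ j) \<rho>"
      have "vupd t j z \<in> polydisc_slice a r (vupd c j z) J"
        using t z insert.hyps(2) unfolding polydisc_slice_def by auto
      then show "F (vupd t j z) = 0" using slice[of z] z by auto
    qed (use bj in auto)
    then show "F t = 0" by simp
  qed
qed

lemma identity_theorem_polydisc:
  fixes F :: "complex ^ 'n \<Rightarrow> complex"
  assumes sub: "polydisc a r \<subseteq> U" and F: "mholo_on U F" and r: "r > 0"
    and b: "b \<in> polydisc a r" and e: "e > 0" and Z: "\<forall>s\<in>ball b e. F s = 0"
  shows "\<forall>t\<in>polydisc a r. F t = 0"
proof -
  have "\<forall>t\<in>polydisc a r. (\<forall>j\<in>UNIV. dist (b $ j) (t $ j) < e / real CARD('n)) \<longrightarrow> F t = 0"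
    using polydisc_subset_ball[OF e, of b] Z unfolding polydisc_def by blast
  moreover have "e / real CARD('n) > 0" using e by simp
  ultimately show ?thesis
    using identity_theorem_polydisc_slice[OF sub F, of _ a b UNIV] center_in_polydisc[OF r] b
    unfolding polydisc_slice_UNIV by blast
qed

lemma identity_theorem_connected:
  fixes F :: "complex ^ 'n \<Rightarrow> complex"
  assumes U: "connected U" and F: "mholo_on U F"
    and b: "b \<in> U" and e: "e > 0" and Z: "\<forall>s\<in>ball b e. F s = 0"
  shows "\<forall>t\<in>U. F t = 0"
proof -
  have U_open: "open U" by (rule mholo_on_open[OF F])
  define N where "N = U \<inter> interior {t. F t = 0}"
  have op: "openin (top_of_set U) N" unfolding N_def by blast
  have cl: "closedin (top_of_set U) N"
    unfolding closedin_limpt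
  proof (intro conjI allI impI)
    show "N \<subseteq> U" unfolding N_def by blast
    fix t assume limpt: "t islimpt N \<and> t \<in> U"
    obtain r where r: "r > 0" "polydisc t r \<subseteq> U" using open_contains_polydisc U_open limpt by blast
    obtain t' where t': "t' \<in> N" "dist t' t < r" using limpt r(1) islimpt_approachable by blast
    have t'_in: "t' \<in> polydisc t r" using ball_subset_polydisc[of t r] t'(2) by (auto simp: dist_commute)
    obtain e' where e': "e' > 0" "ball t' e' \<subseteq> {t. F t = 0}" using t'(1) unfolding N_def Int_iff mem_interior by blast
    have "\<forall>s\<in>polydisc t r. F s = 0"
      by (rule identity_theorem_polydisc[OF r(2) F r(1) t'_in e'(1)]) (use e'(2) in blast)
    then have "ball t r \<subseteq> {t. F t = 0}" using ball_subset_polydisc by blast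
    then show "t \<in> N" unfolding N_def Int_iff mem_interior using limpt r(1) by blast
  qed
  have "b \<in> N" unfolding N_def Int_iff mem_interior using b e Z by blast
  then have "N = U" using U op cl unfolding connected_clopen by blast
  then show ?thesis unfolding N_def using interior_subset by blast
qed

lemma mholo_on_mult_eq_0:
  fixes F G :: "complex ^ 'n \<Rightarrow> complex"
  assumes U: "connected U" and F: "mholo_on U F" and G: "mholo_on U G"
    and FG: "\<forall>t\<in>U. F t * G t = 0"
  shows "(\<forall>t\<in>U. F t = 0) \<or> (\<forall>t\<in>U. G t = 0)"
proof (rule ccontr)
  assume "\<not> ?thesis"
  then obtain b where b: "b \<in> U" "F b \<noteq> 0" and "\<exists>t\<in>U. G t \<noteq> 0" by blast
  have U_open: "open U" by (rule mholo_on_open[OF F])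
  have "continuous (at b) F"
    using mholo_on_continuous_on[OF F] U_open b(1) continuous_on_eq_continuous_at by blast
  then obtain e where e: "e > 0" "\<forall>y. dist b y < e \<longrightarrow> F y \<noteq> 0" using continuous_at_avoid b(2) by blast
  obtain e2 where e2: "e2 > 0" "ball b e2 \<subseteq> U" using U_open b(1) open_contains_ball by blast
  have "\<forall>s\<in>ball b (min e e2). G s = 0" using e e2 FG by fastforce
  then have "\<forall>t\<in>U. G t = 0"
    by (intro identity_theorem_connected[OF U G b(1)]) (use e e2 in auto)
  then show False using \<open>\<exists>t\<in>U. G t \<noteq> 0\<close> by blast
qed

lemma mholo_on_mult_eq_0_slice:
  fixes F G :: "complex ^ 'n \<Rightarrow> complex"
  assumes sub: "polydisc a r \<subseteq> U" and r: "r > 0" and F: "mholo_on U F" and G: "mholo_on U G"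
    and FG: "\<forall>t\<in>polydisc_slice a r a J. F t * G t = 0"
  shows "(\<forall>t\<in>polydisc_slice a r a J. F t = 0) \<or> (\<forall>t\<in>polydisc_slice a r a J. G t = 0)"
proof (rule ccontr)
  assume "\<not> ?thesis"
  then obtain b where b: "b \<in> polydisc_slice a r a J" "F b \<noteq> 0"
    and "\<exists>t\<in>polydisc_slice a r a J. G t \<noteq> 0" by blast
  have bU: "b \<in> U" using polydisc_slice_subset[OF center_in_polydisc[OF r]] b(1) sub by blast
  have "continuous (at b) F"
    using mholo_on_continuous_on[OF F] mholo_on_open[OF F] bU continuous_on_eq_continuous_at by blast
  then obtain e where e: "e > 0" "\<forall>y. dist b y < e \<longrightarrow> F y \<noteq> 0" using continuous_at_avoid b(2) by blast
  have "G t = 0"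
    if t: "t \<in> polydisc_slice a r a J" and d: "\<forall>j\<in>J. dist (b $ j) (t $ j) < e / real CARD('n)" for t
  proof -
    have "dist (b $ j) (t $ j) < e / real CARD('n)" for j
    proof (cases "j \<in> J")
      case False
      then have "b $ j = t $ j" using t b(1) unfolding polydisc_slice_def by auto
      then show ?thesis using e(1) by simp
    qed (use d in blast)
    then have "t \<in> ball b e" using polydisc_subset_ball[OF e(1), of b] unfolding polydisc_def by blast
    then show "G t = 0" using e FG t by auto
  qed
  moreover have "e / real CARD('n) > 0" using e(1) by simp
  ultimately have "\<forall>t\<in>polydisc_slice a r a J. G t = 0"
    using identity_theorem_polydisc_slice[OF sub G _ center_in_polydisc[OF r] b(1)] by blast
  then show False using \<open>\<exists>t\<in>polydisc_slice a r a J. G t \<noteq> 0\<close> by blast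
qed

section \<open>Spans of monomials on a set of points\<close>

lemma sum_fun_apply: "(sum f A) x = (\<Sum>a\<in>A. f a x)"
  by (induction A rule: infinite_finite_induct) auto

text \<open>Pointwise scaling makes the complex-valued functions on any type a complex vector space,
  which gives access to span and the dimension bounds of the locale vector_space.\<close>

definition fun_scale :: "complex \<Rightarrow> ('x \<Rightarrow> complex) \<Rightarrow> ('x \<Rightarrow> complex)" where
  "fun_scale c f = (\<lambda>x. c * f x)"

lemma fun_scale_apply [simp]: "fun_scale c f x = c * f x" by (simp add: fun_scale_def)

interpretation fun_vs: vector_space "fun_scale :: complex \<Rightarrow> ('x \<Rightarrow> complex) \<Rightarrow> ('x \<Rightarrow> complex)"
  by unfold_locales (simp_all add: fun_eq_iff algebra_simps)

definition monomial_fun :: "'i set \<Rightarrow> ('i \<Rightarrow> nat) \<Rightarrow> ('i \<Rightarrow> complex) \<Rightarrow> complex" where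
  "monomial_fun S b = (\<lambda>p. \<Prod>s\<in>S. p s ^ b s)"

definition monomials :: "'i set \<Rightarrow> nat \<Rightarrow> (('i \<Rightarrow> complex) \<Rightarrow> complex) set" where
  "monomials S B = monomial_fun S ` (PiE S (\<lambda>_. {..B}))"

text \<open>Functions on Z are represented by their extension by 0, so that equality on Z becomes
  equality of functions.\<close>

definition zero_outside :: "('i \<Rightarrow> complex) set \<Rightarrow> (('i \<Rightarrow> complex) \<Rightarrow> complex) \<Rightarrow> (('i \<Rightarrow> complex) \<Rightarrow> complex)" where
  "zero_outside Z f = (\<lambda>p. if p \<in> Z then f p else 0)"

definition mspan_gens :: "('i \<Rightarrow> complex) set \<Rightarrow> 'i set \<Rightarrow> nat \<Rightarrow> (('i \<Rightarrow> complex) \<Rightarrow> complex) set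
     \<Rightarrow> (('i \<Rightarrow> complex) \<Rightarrow> complex) set" where
  "mspan_gens Z S B G = (\<lambda>(m, g). zero_outside Z (\<lambda>p. m p * g p)) ` (monomials S B \<times> G)"

definition mspan :: "('i \<Rightarrow> complex) set \<Rightarrow> 'i set \<Rightarrow> nat \<Rightarrow> (('i \<Rightarrow> complex) \<Rightarrow> complex) set
     \<Rightarrow> (('i \<Rightarrow> complex) \<Rightarrow> complex) set" where
  "mspan Z S B G = fun_vs.span (mspan_gens Z S B G)"

definition set_mult :: "(('i \<Rightarrow> complex) \<Rightarrow> complex) set \<Rightarrow> (('i \<Rightarrow> complex) \<Rightarrow> complex) set \<Rightarrow> (('i \<Rightarrow> complex) \<Rightarrow> complex) set" where
  "set_mult G1 G2 = (\<lambda>(g1, g2). (\<lambda>p. g1 p * g2 p)) ` (G1 \<times> G2)"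

lemma finite_monomials: "finite S \<Longrightarrow> finite (monomials S B)"
  unfolding monomials_def by (auto intro!: finite_PiE)

lemma card_monomials_le: "finite S \<Longrightarrow> card (monomials S B) \<le> (B + 1) ^ card S"
proof -
  assume S: "finite S"
  have "card (monomials S B) \<le> card (PiE S (\<lambda>_. {..B}))" unfolding monomials_def by (rule card_image_le) (use S in \<open>auto intro!: finite_PiE\<close>)
  also have "\<dots> = (B + 1) ^ card S" using S by (simp add: card_PiE)
  finally show ?thesis .
qed

lemma finite_mspan_gens: "finite S \<Longrightarrow> finite G \<Longrightarrow> finite (mspan_gens Z S B G)"
  unfolding mspan_gens_def using finite_monomials by auto

lemma card_mspan_gens_le: "finite S \<Longrightarrow> finite G \<Longrightarrow> card (mspan_gens Z S B G) \<le> (B + 1) ^ card S * card G"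
proof -
  assume S: "finite S" and G: "finite G"
  have "card (mspan_gens Z S B G) \<le> card (monomials S B \<times> G)" unfolding mspan_gens_def
    by (rule card_image_le) (use S G finite_monomials in auto)
  also have "\<dots> = card (monomials S B) * card G" by (simp add: card_cartesian_product)
  also have "\<dots> \<le> (B + 1) ^ card S * card G" using card_monomials_le[OF S] by simp
  finally show ?thesis .
qed

lemma monomials_mono: "B \<le> B' \<Longrightarrow> monomials S B \<subseteq> monomials S B'"
  unfolding monomials_def by (rule image_mono) (auto simp: PiE_def Pi_def)

lemma mspan_mono: "B \<le> B' \<Longrightarrow> G \<subseteq> G' \<Longrightarrow> mspan Z S B G \<subseteq> mspan Z S B' G'"
  unfolding mspan_def mspan_gens_def
  by (rule fun_vs.span_mono) (use monomials_mono in blast)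

lemma monomial_fun_mult:
  assumes "b1 \<in> PiE S (\<lambda>_. {..B1})" "b2 \<in> PiE S (\<lambda>_. {..B2})"
  shows "(\<lambda>p. monomial_fun S b1 p * monomial_fun S b2 p) = monomial_fun S (restrict (\<lambda>s. b1 s + b2 s) S)"
    "restrict (\<lambda>s. b1 s + b2 s) S \<in> PiE S (\<lambda>_. {..B1 + B2})"
proof -
  have "monomial_fun S b1 p * monomial_fun S b2 p = monomial_fun S (restrict (\<lambda>s. b1 s + b2 s) S) p" for p
  proof -
    have "monomial_fun S b1 p * monomial_fun S b2 p = (\<Prod>s\<in>S. p s ^ b1 s * p s ^ b2 s)"
      unfolding monomial_fun_def by (rule prod.distrib[symmetric])
    also have "\<dots> = monomial_fun S (restrict (\<lambda>s. b1 s + b2 s) S) p"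
      unfolding monomial_fun_def by (rule prod.cong) (simp_all add: power_add)
    finally show ?thesis .
  qed
  then show "(\<lambda>p. monomial_fun S b1 p * monomial_fun S b2 p) = monomial_fun S (restrict (\<lambda>s. b1 s + b2 s) S)" by auto
  show "restrict (\<lambda>s. b1 s + b2 s) S \<in> PiE S (\<lambda>_. {..B1 + B2})"
    using assms by (auto simp: PiE_def Pi_def add_mono)
qed

lemma monomials_mult: "m1 \<in> monomials S B1 \<Longrightarrow> m2 \<in> monomials S B2 \<Longrightarrow> (\<lambda>p. m1 p * m2 p) \<in> monomials S (B1 + B2)"
proof -
  assume "m1 \<in> monomials S B1" "m2 \<in> monomials S B2"
  then obtain b1 b2 where b: "b1 \<in> PiE S (\<lambda>_. {..B1})" "m1 = monomial_fun S b1" "b2 \<in> PiE S (\<lambda>_. {..B2})" "m2 = monomial_fun S b2"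
    unfolding monomials_def by blast
  have "(\<lambda>p. m1 p * m2 p) = monomial_fun S (restrict (\<lambda>s. b1 s + b2 s) S)" using monomial_fun_mult(1)[OF b(1,3)] b by simp
  moreover have "restrict (\<lambda>s. b1 s + b2 s) S \<in> PiE S (\<lambda>_. {..B1 + B2})" by (rule monomial_fun_mult(2)[OF b(1,3)])
  ultimately show ?thesis unfolding monomials_def by (rule image_eqI)
qed

lemma mspan_gens_mult:
  assumes "a \<in> mspan_gens Z S B1 G1" "b \<in> mspan_gens Z S B2 G2"
  shows "a * b \<in> mspan_gens Z S (B1 + B2) (set_mult G1 G2)"
proof -
  obtain m1 g1 where 1: "m1 \<in> monomials S B1" "g1 \<in> G1" "a = zero_outside Z (\<lambda>p. m1 p * g1 p)" using assms(1) unfolding mspan_gens_def by auto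
  obtain m2 g2 where 2: "m2 \<in> monomials S B2" "g2 \<in> G2" "b = zero_outside Z (\<lambda>p. m2 p * g2 p)" using assms(2) unfolding mspan_gens_def by auto
  have "a * b = zero_outside Z (\<lambda>p. (\<lambda>p. m1 p * m2 p) p * (\<lambda>p. g1 p * g2 p) p)"
    using 1 2 by (auto simp: zero_outside_def fun_eq_iff)
  moreover have "(\<lambda>p. m1 p * m2 p) \<in> monomials S (B1 + B2)" using monomials_mult 1 2 by blast
  moreover have "(\<lambda>p. g1 p * g2 p) \<in> set_mult G1 G2" using 1 2 unfolding set_mult_def by auto
  ultimately show ?thesis unfolding mspan_gens_def by auto
qed

lemma fun_vs_span_mult:
  fixes A B C :: "('x \<Rightarrow> complex) set"
  assumes "\<And>a b. a \<in> A \<Longrightarrow> b \<in> B \<Longrightarrow> a * b \<in> C"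
    and u: "u \<in> fun_vs.span A" and v: "v \<in> fun_vs.span B"
  shows "u * v \<in> fun_vs.span C"
proof -
  obtain T1 r1 where T1: "finite T1" "T1 \<subseteq> A" "u = (\<Sum>a\<in>T1. fun_scale (r1 a) a)"
    using u unfolding fun_vs.span_explicit by blast
  obtain T2 r2 where T2: "finite T2" "T2 \<subseteq> B" "v = (\<Sum>a\<in>T2. fun_scale (r2 a) a)"
    using v unfolding fun_vs.span_explicit by blast
  have "u * v = (\<Sum>a\<in>T1. \<Sum>b\<in>T2. fun_scale (r1 a) a * fun_scale (r2 b) b)"
    unfolding T1(3) T2(3) by (rule sum_product)
  also have "\<dots> = (\<Sum>a\<in>T1. \<Sum>b\<in>T2. fun_scale (r1 a * r2 b) (a * b))"
    by (intro sum.cong refl) (simp add: fun_eq_iff)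
  also have "\<dots> \<in> fun_vs.span C"
    by (intro fun_vs.span_sum fun_vs.span_scale fun_vs.span_base assms(1)) (use T1 T2 in auto)
  finally show ?thesis .
qed

lemma mspan_mult: "u \<in> mspan Z S B1 G1 \<Longrightarrow> v \<in> mspan Z S B2 G2 \<Longrightarrow> u * v \<in> mspan Z S (B1 + B2) (set_mult G1 G2)"
  unfolding mspan_def by (rule fun_vs_span_mult[OF mspan_gens_mult])

lemma zero_outside_mult: "zero_outside Z (\<lambda>p. f p * g p) = zero_outside Z f * zero_outside Z g"
  by (auto simp: zero_outside_def fun_eq_iff)

lemma zero_outside_add: "zero_outside Z (\<lambda>p. f p + g p) = zero_outside Z f + zero_outside Z g"
  by (auto simp: zero_outside_def fun_eq_iff)

lemma set_mult_one: "set_mult {\<lambda>_. 1} G = G" "set_mult G {\<lambda>_. 1} = G"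
  unfolding set_mult_def by (auto simp: image_iff)

lemma one_in_monomials: "(\<lambda>_. 1) \<in> monomials S B"
proof -
  have "restrict (\<lambda>_. 0) S \<in> PiE S (\<lambda>_. {..B})" by auto
  moreover have "monomial_fun S (restrict (\<lambda>_. 0) S) = (\<lambda>_. 1)" unfolding monomial_fun_def by auto
  ultimately show ?thesis unfolding monomials_def by (metis image_eqI)
qed

lemma mspan_gen: "g \<in> G \<Longrightarrow> zero_outside Z g \<in> mspan Z S B G"
proof -
  assume g: "g \<in> G"
  have "zero_outside Z (\<lambda>p. (\<lambda>_. 1) p * g p) \<in> mspan_gens Z S B G" unfolding mspan_gens_def using one_in_monomials g by force
  then show ?thesis unfolding mspan_def by (auto intro: fun_vs.span_base)
qed

lemma mspan_var_power:
  assumes "s \<in> S" "j \<le> B" "finite S"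
  shows "zero_outside Z (\<lambda>p. p s ^ j) \<in> mspan Z S B {\<lambda>_. 1}"
proof -
  define b where "b = restrict (\<lambda>i. if i = s then j else 0) S"
  have "b \<in> PiE S (\<lambda>_. {..B})" unfolding b_def using assms by auto
  moreover have "monomial_fun S b = (\<lambda>p. p s ^ j)"
  proof -
    have "monomial_fun S b p = p s ^ j" for p
      unfolding monomial_fun_def b_def using assms by (simp add: prod.remove[of S s] prod.neutral)
    then show ?thesis by (auto simp: fun_eq_iff)
  qed
  ultimately have "(\<lambda>p. p s ^ j) \<in> monomials S B" unfolding monomials_def by (metis image_eqI)
  then have "zero_outside Z (\<lambda>p. (\<lambda>p. p s ^ j) p * (\<lambda>_. 1) p) \<in> mspan_gens Z S B {\<lambda>_. 1}" unfolding mspan_gens_def by force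
  then show ?thesis unfolding mspan_def by (auto intro: fun_vs.span_base)
qed

lemma mspan_zpoly: "f \<in> zpoly S \<Longrightarrow> finite S \<Longrightarrow> \<exists>B. zero_outside Z f \<in> mspan Z S B {\<lambda>_. 1}"
proof (induction rule: zpoly.induct)
  case (zpoly_const c)
  have "zero_outside Z (\<lambda>_. 1) \<in> mspan Z S 0 {\<lambda>_. 1}" by (rule mspan_gen) simp
  then have "fun_scale c (zero_outside Z (\<lambda>_. 1)) \<in> mspan Z S 0 {\<lambda>_. 1}" unfolding mspan_def by (rule fun_vs.span_scale)
  moreover have "fun_scale c (zero_outside Z (\<lambda>_. 1)) = zero_outside Z (\<lambda>_. c)" by (auto simp: zero_outside_def fun_eq_iff)
  ultimately show ?case by auto
next
  case (zpoly_var i)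
  show ?case using mspan_var_power[OF zpoly_var(1), of 1 1 Z] zpoly_var(2) by auto
next
  case (zpoly_add f g)
  then obtain B1 B2 where "zero_outside Z f \<in> mspan Z S B1 {\<lambda>_. 1}" "zero_outside Z g \<in> mspan Z S B2 {\<lambda>_. 1}" by blast
  then have "zero_outside Z f \<in> mspan Z S (max B1 B2) {\<lambda>_. 1}" "zero_outside Z g \<in> mspan Z S (max B1 B2) {\<lambda>_. 1}"
    using mspan_mono[of B1 "max B1 B2" "{\<lambda>_. 1}" "{\<lambda>_. 1}" Z S] mspan_mono[of B2 "max B1 B2" "{\<lambda>_. 1}" "{\<lambda>_. 1}" Z S] by auto
  then have "zero_outside Z f + zero_outside Z g \<in> mspan Z S (max B1 B2) {\<lambda>_. 1}" unfolding mspan_def by (rule fun_vs.span_add)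
  then have "zero_outside Z (\<lambda>p. f p + g p) \<in> mspan Z S (max B1 B2) {\<lambda>_. 1}" by (simp only: zero_outside_add)
  then show ?case by blast
next
  case (zpoly_mult f g)
  then obtain B1 B2 where "zero_outside Z f \<in> mspan Z S B1 {\<lambda>_. 1}" "zero_outside Z g \<in> mspan Z S B2 {\<lambda>_. 1}" by blast
  then have "zero_outside Z f * zero_outside Z g \<in> mspan Z S (B1 + B2) (set_mult {\<lambda>_. 1} {\<lambda>_. 1})" by (rule mspan_mult)
  then have "zero_outside Z (\<lambda>p. f p * g p) \<in> mspan Z S (B1 + B2) {\<lambda>_. 1}" by (simp only: zero_outside_mult set_mult_one)
  then show ?case by blast
qed

lemma mspan_power: "zero_outside Z f \<in> mspan Z S B {\<lambda>_. 1} \<Longrightarrow> zero_outside Z (\<lambda>p. f p ^ k) \<in> mspan Z S (B * k) {\<lambda>_. 1}"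
proof (induction k)
  case 0 then show ?case by (simp add: mspan_gen)
next
  case (Suc k)
  then have "zero_outside Z f * zero_outside Z (\<lambda>p. f p ^ k) \<in> mspan Z S (B + B * k) (set_mult {\<lambda>_. 1} {\<lambda>_. 1})"
    by (intro mspan_mult) auto
  then have "zero_outside Z (\<lambda>p. f p * f p ^ k) \<in> mspan Z S (B + B * k) {\<lambda>_. 1}" by (simp only: zero_outside_mult set_mult_one)
  then show ?case by (simp add: algebra_simps)
qed

lemma mspan_mult_left: "u \<in> mspan Z S B1 {\<lambda>_. 1} \<Longrightarrow> v \<in> mspan Z S B2 G \<Longrightarrow> u * v \<in> mspan Z S (B1 + B2) G"
  using mspan_mult[of u Z S B1 "{\<lambda>_. 1}" v B2 G] by (simp only: set_mult_one)

lemma mspan_mono_bound: "u \<in> mspan Z S B G \<Longrightarrow> B \<le> B' \<Longrightarrow> u \<in> mspan Z S B' G"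
  using mspan_mono[of B B' G G Z S] by blast

lemma mspan_mono_gens: "u \<in> mspan Z S B G \<Longrightarrow> G \<subseteq> G' \<Longrightarrow> u \<in> mspan Z S B G'"
  using mspan_mono[of B B G G' Z S] by blast

lemma set_mult_mono: "G1 \<subseteq> G1' \<Longrightarrow> G2 \<subseteq> G2' \<Longrightarrow> set_mult G1 G2 \<subseteq> set_mult G1' G2'"
  unfolding set_mult_def by auto

lemma finite_set_mult: "finite G1 \<Longrightarrow> finite G2 \<Longrightarrow> finite (set_mult G1 G2)"
  unfolding set_mult_def by auto

section \<open>Functions algebraic over a set of coordinates\<close>

text \<open>alg_bounded Z S f is a quantitative form of "f is algebraic over the polynomials in the
  S-coordinates on Z": some denominator L makes all L^k f^j, j \<le> k, lie in the span of a fixed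
  finite G times monomials whose degree grows only linearly in k. This class is a ring, and the
  linear growth is what makes the count of monomials in alg_dependent_explicit work.\<close>

definition alg_bounded :: "('i \<Rightarrow> complex) set \<Rightarrow> 'i set \<Rightarrow> (('i \<Rightarrow> complex) \<Rightarrow> complex) \<Rightarrow> bool" where
  "alg_bounded Z S f \<longleftrightarrow> (\<exists>G L c. finite G \<and> L \<in> zpoly S \<and> (\<exists>p\<in>Z. L p \<noteq> 0) \<and>
     (\<forall>k j. j \<le> k \<longrightarrow> zero_outside Z (\<lambda>p. L p ^ k * f p ^ j) \<in> mspan Z S (c * (k + 1)) G))"

lemma alg_bounded_const: assumes "Z \<noteq> {}" shows "alg_bounded Z S (\<lambda>_. a)"
  unfolding alg_bounded_def
proof (intro exI conjI allI impI)
  show "finite {\<lambda>_::'a \<Rightarrow> complex. 1::complex}" by simp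
  show "(\<lambda>_. 1) \<in> zpoly S" by (rule zpoly_const)
  show "\<exists>p\<in>Z. (1::complex) \<noteq> 0" using assms by auto
  fix k j :: nat
  have "fun_scale (a ^ j) (zero_outside Z (\<lambda>_. 1)) \<in> mspan Z S (0 * (k + 1)) {\<lambda>_. 1}"
    unfolding mspan_def by (rule fun_vs.span_scale) (simp add: mspan_gen[unfolded mspan_def])
  moreover have "fun_scale (a ^ j) (zero_outside Z (\<lambda>_. 1)) = zero_outside Z (\<lambda>p. 1 ^ k * a ^ j)" by (auto simp: zero_outside_def fun_eq_iff)
  ultimately show "zero_outside Z (\<lambda>p. 1 ^ k * a ^ j) \<in> mspan Z S (0 * (k + 1)) {\<lambda>_. 1}" by simp
qed

lemma alg_bounded_var: assumes "Z \<noteq> {}" "s \<in> S" "finite S" shows "alg_bounded Z S (\<lambda>p. p s)"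
  unfolding alg_bounded_def
proof (intro exI conjI allI impI)
  show "finite {\<lambda>_::'a \<Rightarrow> complex. 1::complex}" by simp
  show "(\<lambda>_. 1) \<in> zpoly S" by (rule zpoly_const)
  show "\<exists>p\<in>Z. (1::complex) \<noteq> 0" using assms by auto
  fix k j :: nat assume "j \<le> k"
  then have "zero_outside Z (\<lambda>p. p s ^ j) \<in> mspan Z S (1 * (k + 1)) {\<lambda>_. 1}" by (intro mspan_var_power assms) simp
  then show "zero_outside Z (\<lambda>p. 1 ^ k * p s ^ j) \<in> mspan Z S (1 * (k + 1)) {\<lambda>_. 1}" by simp
qed

lemma zdomain_mult_nonzero:
  assumes "zdomain I Z" "f \<in> zpoly I" "g \<in> zpoly I" "\<exists>p\<in>Z. f p \<noteq> 0" "\<exists>p\<in>Z. g p \<noteq> 0"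
  shows "\<exists>p\<in>Z. f p * g p \<noteq> 0"
  using assms unfolding zdomain_def by blast

lemma alg_bounded_mult:
  assumes dom: "zdomain I Z" and SI: "S \<subseteq> I" and f: "alg_bounded Z S f" and g: "alg_bounded Z S g"
  shows "alg_bounded Z S (\<lambda>p. f p * g p)"
proof -
  obtain Gf Lf cf where F: "finite Gf" "Lf \<in> zpoly S" "\<exists>p\<in>Z. Lf p \<noteq> 0"
    "\<forall>k j. j \<le> k \<longrightarrow> zero_outside Z (\<lambda>p. Lf p ^ k * f p ^ j) \<in> mspan Z S (cf * (k + 1)) Gf"
    using f unfolding alg_bounded_def by blast
  obtain Gg Lg cg where G: "finite Gg" "Lg \<in> zpoly S" "\<exists>p\<in>Z. Lg p \<noteq> 0"
    "\<forall>k j. j \<le> k \<longrightarrow> zero_outside Z (\<lambda>p. Lg p ^ k * g p ^ j) \<in> mspan Z S (cg * (k + 1)) Gg"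
    using g unfolding alg_bounded_def by blast
  show ?thesis unfolding alg_bounded_def
  proof (intro exI conjI allI impI)
    show "finite (set_mult Gf Gg)" using F G by (simp add: finite_set_mult)
    show "(\<lambda>p. Lf p * Lg p) \<in> zpoly S" using F G by (simp add: zpoly_mult)
    show "\<exists>p\<in>Z. Lf p * Lg p \<noteq> 0"
      by (rule zdomain_mult_nonzero[OF dom]) (use F G SI zpoly_mono in auto)
    fix k j :: nat assume jk: "j \<le> k"
    have "zero_outside Z (\<lambda>p. Lf p ^ k * f p ^ j) * zero_outside Z (\<lambda>p. Lg p ^ k * g p ^ j) \<in> mspan Z S (cf * (k + 1) + cg * (k + 1)) (set_mult Gf Gg)"
      by (rule mspan_mult) (use F G jk in auto)
    moreover have "zero_outside Z (\<lambda>p. Lf p ^ k * f p ^ j) * zero_outside Z (\<lambda>p. Lg p ^ k * g p ^ j) =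
        zero_outside Z (\<lambda>p. (Lf p * Lg p) ^ k * (f p * g p) ^ j)"
      by (auto simp: zero_outside_def fun_eq_iff power_mult_distrib)
    ultimately show "zero_outside Z (\<lambda>p. (Lf p * Lg p) ^ k * (f p * g p) ^ j) \<in> mspan Z S ((cf + cg) * (k + 1)) (set_mult Gf Gg)"
      by (simp add: algebra_simps)
  qed
qed

lemma alg_bounded_add:
  assumes dom: "zdomain I Z" and SI: "S \<subseteq> I" and f: "alg_bounded Z S f" and g: "alg_bounded Z S g"
  shows "alg_bounded Z S (\<lambda>p. f p + g p)"
proof -
  obtain Gf Lf cf where F: "finite Gf" "Lf \<in> zpoly S" "\<exists>p\<in>Z. Lf p \<noteq> 0"
    "\<forall>k j. j \<le> k \<longrightarrow> zero_outside Z (\<lambda>p. Lf p ^ k * f p ^ j) \<in> mspan Z S (cf * (k + 1)) Gf"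
    using f unfolding alg_bounded_def by blast
  obtain Gg Lg cg where G: "finite Gg" "Lg \<in> zpoly S" "\<exists>p\<in>Z. Lg p \<noteq> 0"
    "\<forall>k j. j \<le> k \<longrightarrow> zero_outside Z (\<lambda>p. Lg p ^ k * g p ^ j) \<in> mspan Z S (cg * (k + 1)) Gg"
    using g unfolding alg_bounded_def by blast
  show ?thesis unfolding alg_bounded_def
  proof (intro exI conjI allI impI)
    show "finite (set_mult Gf Gg)" using F G by (simp add: finite_set_mult)
    show "(\<lambda>p. Lf p * Lg p) \<in> zpoly S" using F G by (simp add: zpoly_mult)
    show "\<exists>p\<in>Z. Lf p * Lg p \<noteq> 0"
      by (rule zdomain_mult_nonzero[OF dom]) (use F G SI zpoly_mono in auto)
    fix k j :: nat assume jk: "j \<le> k"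
    have term_in_span: "zero_outside Z (\<lambda>p. Lf p ^ k * f p ^ i) * zero_outside Z (\<lambda>p. Lg p ^ k * g p ^ (j - i)) \<in> mspan Z S ((cf + cg) * (k + 1)) (set_mult Gf Gg)"
      if "i \<in> {..j}" for i
    proof -
      have "zero_outside Z (\<lambda>p. Lf p ^ k * f p ^ i) * zero_outside Z (\<lambda>p. Lg p ^ k * g p ^ (j - i)) \<in> mspan Z S (cf * (k + 1) + cg * (k + 1)) (set_mult Gf Gg)"
        by (rule mspan_mult) (use F G jk that in auto)
      then show ?thesis by (simp add: algebra_simps)
    qed
    have eq: "zero_outside Z (\<lambda>p. (Lf p * Lg p) ^ k * (f p + g p) ^ j) =
      (\<Sum>i\<in>{..j}. fun_scale (of_nat (j choose i)) (zero_outside Z (\<lambda>p. Lf p ^ k * f p ^ i) * zero_outside Z (\<lambda>p. Lg p ^ k * g p ^ (j - i))))"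
    proof (rule ext)
      fix p
      show "zero_outside Z (\<lambda>p. (Lf p * Lg p) ^ k * (f p + g p) ^ j) p =
        (\<Sum>i\<in>{..j}. fun_scale (of_nat (j choose i)) (zero_outside Z (\<lambda>p. Lf p ^ k * f p ^ i) * zero_outside Z (\<lambda>p. Lg p ^ k * g p ^ (j - i)))) p"
        unfolding sum_fun_apply
        by (cases "p \<in> Z") (simp_all add: zero_outside_def binomial_ring sum_distrib_left power_mult_distrib algebra_simps)
    qed
    show "zero_outside Z (\<lambda>p. (Lf p * Lg p) ^ k * (f p + g p) ^ j) \<in> mspan Z S ((cf + cg) * (k + 1)) (set_mult Gf Gg)"
      unfolding eq mspan_def by (intro fun_vs.span_sum fun_vs.span_scale term_in_span[unfolded mspan_def])
  qed
qed

lemma alg_bounded_zpoly: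
  assumes "f \<in> zpoly X" "Z \<noteq> {}" "zdomain I Z" "S \<subseteq> I" "\<And>c. c \<in> X \<Longrightarrow> alg_bounded Z S (\<lambda>p. p c)"
  shows "alg_bounded Z S f"
  using assms
proof (induction rule: zpoly.induct)
  case (zpoly_const c) then show ?case by (simp add: alg_bounded_const)
next
  case (zpoly_var i) then show ?case by simp
next
  case (zpoly_add f g) then show ?case by (simp add: alg_bounded_add)
next
  case (zpoly_mult f g) then show ?case by (simp add: alg_bounded_mult)
qed

lemma ex_common_bound:
  fixes e :: nat and P :: "nat \<Rightarrow> nat \<Rightarrow> bool"
  assumes "\<forall>k<e. \<exists>B. P k B" "\<And>k B B'. P k B \<Longrightarrow> B \<le> B' \<Longrightarrow> P k B'"
  shows "\<exists>B. \<forall>k<e. P k B"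
  using assms(1)
proof (induction e)
  case 0 then show ?case by simp
next
  case (Suc e)
  then obtain B1 where B1: "\<forall>k<e. P k B1" by auto
  obtain B2 where B2: "P e B2" using Suc.prems by auto
  have "\<forall>k<Suc e. P k (max B1 B2)"
  proof (intro allI impI)
    fix k assume "k < Suc e"
    then have "k < e \<or> k = e" by auto
    then show "P k (max B1 B2)"
    proof
      assume "k < e" show ?thesis by (rule assms(2)[OF _ max.cobounded1]) (use B1 \<open>k < e\<close> in simp)
    next
      assume "k = e" show ?thesis by (rule assms(2)[OF _ max.cobounded2]) (use B2 \<open>k = e\<close> in simp)
    qed
  qed
  then show ?case by blast
qed

lemma zero_outside_reduce_power:
  assumes rel: "\<forall>p\<in>Z. L p * f p ^ e = (\<Sum>i<e. q i p * f p ^ i)" and ej: "e \<le> j"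
  shows "zero_outside Z (\<lambda>p. L p ^ Suc k * f p ^ j)
    = (\<Sum>i<e. zero_outside Z (q i) * zero_outside Z (\<lambda>p. L p ^ k * f p ^ (j - e + i)))"
proof (rule ext)
  fix p
  show "zero_outside Z (\<lambda>p. L p ^ Suc k * f p ^ j) p
    = (\<Sum>i<e. zero_outside Z (q i) * zero_outside Z (\<lambda>p. L p ^ k * f p ^ (j - e + i))) p"
  proof (cases "p \<in> Z")
    case True
    have "f p ^ j = f p ^ (j - e) * f p ^ e" using ej by (simp add: power_add[symmetric])
    then have "L p ^ Suc k * f p ^ j = L p ^ k * f p ^ (j - e) * (L p * f p ^ e)"
      by (simp add: algebra_simps)
    also have "\<dots> = L p ^ k * f p ^ (j - e) * (\<Sum>i<e. q i p * f p ^ i)" using rel True by simp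
    also have "\<dots> = (\<Sum>i<e. q i p * (L p ^ k * f p ^ (j - e + i)))"
      by (simp add: sum_distrib_left power_add algebra_simps)
    finally show ?thesis using True by (simp add: zero_outside_def sum_fun_apply)
  qed (simp add: zero_outside_def sum_fun_apply)
qed

text \<open>An integral relation L f^e = \<Sum>i<e. q i f^i reduces every L^k f^j with j \<le> k to the
  powers f^i, i < e; each reduction step uses up one factor L and raises the degree of the
  coefficients by a bounded amount.\<close>

lemma alg_bounded_of_relation:
  assumes S: "finite S" and L: "L \<in> zpoly S" "\<exists>p\<in>Z. L p \<noteq> 0"
    and q: "\<forall>i<e. q i \<in> zpoly S"
    and rel: "\<forall>p\<in>Z. L p * f p ^ e = (\<Sum>i<e. q i p * f p ^ i)"
  shows "alg_bounded Z S f"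
proof -
  have e: "e \<ge> 1" using rel L(2) by (cases e) auto
  obtain l where l: "zero_outside Z L \<in> mspan Z S l {\<lambda>_. 1}" using mspan_zpoly[OF L(1) S] by blast
  have "\<forall>i<e. \<exists>B. zero_outside Z (q i) \<in> mspan Z S B {\<lambda>_. 1}" using mspan_zpoly S q by blast
  then obtain Bq where Bq: "\<forall>i<e. zero_outside Z (q i) \<in> mspan Z S Bq {\<lambda>_. 1}"
    using ex_common_bound[where P="\<lambda>i B. zero_outside Z (q i) \<in> mspan Z S B {\<lambda>_. 1}"] mspan_mono_bound
    by blast
  define G where "G = (\<lambda>i p. f p ^ i) ` {..<e}"
  define c where "c = l + Bq"
  have "zero_outside Z (\<lambda>p. L p ^ k * f p ^ j) \<in> mspan Z S (c * (k + 1)) G" if "j \<le> k" for j k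
    using that
  proof (induction j arbitrary: k rule: less_induct)
    case (less j)
    show ?case
    proof (cases "j < e")
      case True
      have "zero_outside Z (\<lambda>p. L p ^ k) * zero_outside Z (\<lambda>p. f p ^ j) \<in> mspan Z S (l * k + 0) G"
        by (rule mspan_mult_left[OF mspan_power[OF l] mspan_gen]) (use True in \<open>auto simp: G_def\<close>)
      then have "zero_outside Z (\<lambda>p. L p ^ k * f p ^ j) \<in> mspan Z S (l * k) G" by (simp add: zero_outside_mult)
      moreover have "l * k \<le> c * (k + 1)" unfolding c_def by (simp add: algebra_simps)
      ultimately show ?thesis using mspan_mono_bound by blast
    next
      case False
      then have ej: "e \<le> j" by simp
      then obtain k' where k': "k = Suc k'" using e less.prems by (cases k) auto
      have "zero_outside Z (q i) * zero_outside Z (\<lambda>p. L p ^ k' * f p ^ (j - e + i)) \<in> mspan Z S (c * (k + 1)) G"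
        if i: "i < e" for i
      proof -
        have "zero_outside Z (\<lambda>p. L p ^ k' * f p ^ (j - e + i)) \<in> mspan Z S (c * (k' + 1)) G"
          using i e ej less.prems k' by (intro less.IH) auto
        then have "zero_outside Z (q i) * zero_outside Z (\<lambda>p. L p ^ k' * f p ^ (j - e + i))
            \<in> mspan Z S (Bq + c * (k' + 1)) G"
          using Bq i by (intro mspan_mult_left) auto
        moreover have "Bq + c * (k' + 1) \<le> c * (k + 1)" unfolding c_def k' by (simp add: algebra_simps)
        ultimately show ?thesis using mspan_mono_bound by blast
      qed
      then show ?thesis
        unfolding k' zero_outside_reduce_power[OF rel ej] mspan_def
        by (intro fun_vs.span_sum) (auto simp: k' mspan_def)
    qed
  qed
  then show ?thesis unfolding alg_bounded_def using L by (intro exI[of _ G] exI[of _ L] exI[of _ c]) (auto simp: G_def)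
qed

lemma zero_outside_split_power:
  assumes rel: "\<forall>p\<in>Z. L p * f p ^ e = y p" and j: "j = e * q + r" and qk: "q \<le> k"
  shows "zero_outside Z (\<lambda>p. (L p * Ly p) ^ k * f p ^ j)
    = zero_outside Z (\<lambda>p. L p ^ (k - q)) * (zero_outside Z (\<lambda>p. Ly p ^ k * y p ^ q) * zero_outside Z (\<lambda>p. f p ^ r))"
proof (rule ext)
  fix p
  show "zero_outside Z (\<lambda>p. (L p * Ly p) ^ k * f p ^ j) p
    = (zero_outside Z (\<lambda>p. L p ^ (k - q)) * (zero_outside Z (\<lambda>p. Ly p ^ k * y p ^ q) * zero_outside Z (\<lambda>p. f p ^ r))) p"
  proof (cases "p \<in> Z")
    case True
    have yp: "y p = L p * f p ^ e" using rel True by simp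
    have Lk: "L p ^ k = L p ^ q * L p ^ (k - q)" using qk by (simp add: power_add[symmetric])
    have "(L p * Ly p) ^ k * f p ^ j = L p ^ (k - q) * (Ly p ^ k * (L p * f p ^ e) ^ q) * f p ^ r"
      unfolding j by (simp add: Lk power_mult_distrib power_add power_mult algebra_simps)
    then show ?thesis using True yp by (simp add: zero_outside_def algebra_simps)
  qed (simp add: zero_outside_def)
qed

lemma alg_bounded_of_power:
  assumes S: "finite S" and dom: "zdomain I Z" and SI: "S \<subseteq> I"
    and L: "L \<in> zpoly S" "\<exists>p\<in>Z. L p \<noteq> 0"
    and y: "alg_bounded Z S y" and e: "e \<ge> 1"
    and rel: "\<forall>p\<in>Z. L p * f p ^ e = y p"
  shows "alg_bounded Z S f"
proof -
  obtain Gy Ly cy where Y: "finite Gy" "Ly \<in> zpoly S" "\<exists>p\<in>Z. Ly p \<noteq> 0"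
    "\<forall>k j. j \<le> k \<longrightarrow> zero_outside Z (\<lambda>p. Ly p ^ k * y p ^ j) \<in> mspan Z S (cy * (k + 1)) Gy"
    using y unfolding alg_bounded_def by blast
  obtain l where l: "zero_outside Z L \<in> mspan Z S l {\<lambda>_. 1}" using mspan_zpoly[OF L(1) S] by blast
  define G where "G = set_mult Gy ((\<lambda>i p. f p ^ i) ` {..<e})"
  show ?thesis unfolding alg_bounded_def
  proof (intro exI conjI allI impI)
    show "finite G" unfolding G_def using Y(1) by (simp add: finite_set_mult)
    show "(\<lambda>p. L p * Ly p) \<in> zpoly S" using L Y by (simp add: zpoly_mult)
    show "\<exists>p\<in>Z. L p * Ly p \<noteq> 0"
      by (rule zdomain_mult_nonzero[OF dom]) (use L Y SI zpoly_mono in auto)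
    fix k j :: nat assume jk: "j \<le> k"
    define q where "q = j div e"
    define r where "r = j mod e"
    have jqr: "j = e * q + r" unfolding q_def r_def by simp
    have re: "r < e" unfolding r_def using e by simp
    have qk: "q \<le> k" using jk jqr e
      by (metis le_trans mult_le_mono1 mult_1 le_add1 mult.commute)
    have L_part: "zero_outside Z (\<lambda>p. L p ^ (k - q)) \<in> mspan Z S (l * (k - q)) {\<lambda>_. 1}"
      by (rule mspan_power[OF l])
    have y_part: "zero_outside Z (\<lambda>p. Ly p ^ k * y p ^ q) \<in> mspan Z S (cy * (k + 1)) Gy"
      using Y(4) qk by blast
    have "zero_outside Z (\<lambda>p. Ly p ^ k * y p ^ q) * zero_outside Z (\<lambda>p. f p ^ r)
        \<in> mspan Z S (cy * (k + 1) + 0) (set_mult Gy {\<lambda>p. f p ^ r})"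
      by (rule mspan_mult[OF y_part mspan_gen]) simp
    moreover have "set_mult Gy {\<lambda>p. f p ^ r} \<subseteq> G" unfolding G_def by (rule set_mult_mono) (use re in auto)
    ultimately have "zero_outside Z (\<lambda>p. Ly p ^ k * y p ^ q) * zero_outside Z (\<lambda>p. f p ^ r)
        \<in> mspan Z S (cy * (k + 1)) G"
      using mspan_mono_gens by auto
    from mspan_mult_left[OF L_part this]
    have "zero_outside Z (\<lambda>p. (L p * Ly p) ^ k * f p ^ j) \<in> mspan Z S (l * (k - q) + cy * (k + 1)) G"
      unfolding zero_outside_split_power[OF rel jqr qk] .
    moreover have "l * (k - q) + cy * (k + 1) \<le> (l + cy) * (k + 1)" by (simp add: algebra_simps)
    ultimately show "zero_outside Z (\<lambda>p. (L p * Ly p) ^ k * f p ^ j) \<in> mspan Z S ((l + cy) * (k + 1)) G"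
      using mspan_mono_bound by blast
  qed
qed

section \<open>Algebraic dependence by counting monomials\<close>

lemma sum_PiE_insert:
  assumes "a \<notin> B"
  shows "(\<Sum>\<alpha>\<in>PiE (insert a B) (\<lambda>_. {..D::nat}). F \<alpha>) = (\<Sum>i\<le>D. \<Sum>\<beta>\<in>PiE B (\<lambda>_. {..D}). F (\<beta>(a := i)))"
proof -
  let ?X = "PiE B (\<lambda>_. {..D})"
  let ?m = "\<lambda>(i::nat, \<beta>). \<beta>(a := i)"
  have inj: "inj_on ?m ({..D} \<times> ?X)" using inj_combinator[OF assms, of "\<lambda>_. {..D}"] by simp
  have eqX: "PiE (insert a B) (\<lambda>_. {..D}) = ?m ` ({..D} \<times> ?X)" by (rule PiE_insert_eq)
  have "(\<Sum>\<alpha>\<in>PiE (insert a B) (\<lambda>_. {..D}). F \<alpha>) = (\<Sum>x\<in>{..D} \<times> ?X. F (?m x))"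
    unfolding eqX by (rule sum.reindex[OF inj, unfolded comp_def])
  also have "\<dots> = (\<Sum>i\<le>D. \<Sum>\<beta>\<in>?X. F (\<beta>(a := i)))"
    by (simp only: sum.cartesian_product split_def)
  finally show ?thesis .
qed

lemma prod_upd_insert:
  assumes "a \<notin> B" "finite B"
  shows "(\<Prod>ob\<in>insert a B. w ob ^ (\<beta>(a := i)) ob) = w a ^ i * (\<Prod>ob\<in>B. w ob ^ \<beta> ob)"
proof -
  have "(\<Prod>ob\<in>insert a B. w ob ^ (\<beta>(a := i)) ob) = w a ^ i * (\<Prod>ob\<in>B. w ob ^ (\<beta>(a := i)) ob)"
    using assms by simp
  also have "(\<Prod>ob\<in>B. w ob ^ (\<beta>(a := i)) ob) = (\<Prod>ob\<in>B. w ob ^ \<beta> ob)"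
    by (rule prod.cong) (use assms in auto)
  finally show ?thesis .
qed

lemma monomial_coeffs_eq_0:
  fixes c :: "('a \<Rightarrow> nat) \<Rightarrow> complex"
  assumes "finite A" and "\<forall>q::'a \<Rightarrow> complex. (\<Sum>\<alpha>\<in>PiE A (\<lambda>_. {..D}). c \<alpha> * (\<Prod>a\<in>A. q a ^ \<alpha> a)) = 0"
  shows "\<forall>\<alpha>\<in>PiE A (\<lambda>_. {..D}). c \<alpha> = 0"
  using assms
proof (induction A arbitrary: c rule: finite_induct)
  case empty
  then show ?case by simp
next
  case (insert a A)
  let ?X = "PiE A (\<lambda>_. {..D})"
  define C where "C q i = (\<Sum>\<beta>\<in>?X. c (\<beta>(a := i)) * (\<Prod>b\<in>A. q b ^ \<beta> b))" for q i
  have expand: "(\<Sum>\<alpha>\<in>PiE (insert a A) (\<lambda>_. {..D}). c \<alpha> * (\<Prod>b\<in>insert a A. q b ^ \<alpha> b))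
      = (\<Sum>i\<le>D. C q i * q a ^ i)" for q
    unfolding sum_PiE_insert[OF insert.hyps(2)] prod_upd_insert[OF insert.hyps(2,1)] C_def
    by (simp add: sum_distrib_left sum_distrib_right algebra_simps)
  have C0: "C q i = 0" if "i \<le> D" for q i
  proof -
    have "\<forall>x. (\<Sum>i\<le>D. C (q(a := x)) i * x ^ i) = 0"
      using insert.prems expand[of "q(a := x)" for x] by auto
    moreover have "C (q(a := x)) i = C q i" for x i
      unfolding C_def by (intro sum.cong refl arg_cong2[where f="(*)"] prod.cong) (use insert.hyps(2) in auto)
    ultimately have "\<forall>x. (\<Sum>i\<le>D. C q i * x ^ i) = 0" by simp
    then show ?thesis using polyfun_eq_0 that by blast
  qed
  have "\<forall>\<beta>\<in>?X. c (\<beta>(a := i)) = 0" if "i \<le> D" for i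
    by (rule insert.IH) (use C0[OF that] in \<open>unfold C_def, blast\<close>)
  then show ?case unfolding PiE_insert_eq by auto
qed

lemma span_card_lt_dependent:
  fixes h :: "'x \<Rightarrow> ('y \<Rightarrow> complex)"
  assumes X: "finite X" and H: "finite H" and card: "card X > card H"
    and sp: "\<forall>x\<in>X. h x \<in> fun_vs.span H"
  shows "\<exists>u. (\<exists>x\<in>X. u x \<noteq> 0) \<and> (\<Sum>x\<in>X. fun_scale (u x) (h x)) = 0"
proof (cases "inj_on h X")
  case False
  then obtain x x' where xx: "x \<in> X" "x' \<in> X" "x \<noteq> x'" "h x = h x'" unfolding inj_on_def by blast
  define u where "u z = (if z = x then 1 else if z = x' then -1 else (0::complex))" for z
  have "(\<Sum>z\<in>X. fun_scale (u z) (h z)) = (\<Sum>z\<in>{x, x'}. fun_scale (u z) (h z))"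
    by (rule sum.mono_neutral_right) (use X xx in \<open>auto simp: u_def fun_scale_def fun_eq_iff\<close>)
  also have "\<dots> = 0" using xx by (auto simp: u_def fun_scale_def fun_eq_iff)
  finally show ?thesis using xx(1) by (intro exI[of _ u]) (auto simp: u_def)
next
  case True
  have "\<not> fun_vs.independent (h ` X)"
  proof
    assume "fun_vs.independent (h ` X)"
    then have "card (h ` X) \<le> card H" using fun_vs.independent_span_bound[OF H] sp by blast
    then show False using card True by (simp add: card_image)
  qed
  then obtain w where w: "\<exists>v\<in>h ` X. w v \<noteq> 0" "(\<Sum>v\<in>h ` X. fun_scale (w v) v) = 0"
    using fun_vs.dependent_finite[of "h ` X"] X by auto
  have "(\<Sum>x\<in>X. fun_scale (w (h x)) (h x)) = (\<Sum>v\<in>h ` X. fun_scale (w v) v)"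
    by (rule sum.reindex[OF True, unfolded comp_def, symmetric])
  then show ?thesis using w by (intro exI[of _ "\<lambda>x. w (h x)"]) auto
qed

lemma alg_bounded_prod_powers:
  fixes y :: "'a \<Rightarrow> ('i \<Rightarrow> complex) \<Rightarrow> complex" and A :: "'a set"
  assumes "finite A" "Z \<noteq> {}" "zdomain I Z" "S \<subseteq> I" "\<forall>a\<in>A. alg_bounded Z S (y a)"
  shows "\<exists>G L c. finite G \<and> L \<in> zpoly S \<and> (\<exists>p\<in>Z. L p \<noteq> 0) \<and>
    (\<forall>k \<alpha>. (\<forall>a\<in>A. \<alpha> a \<le> k) \<longrightarrow> zero_outside Z (\<lambda>p. L p ^ k * (\<Prod>a\<in>A. y a p ^ \<alpha> a)) \<in> mspan Z S (c * (k + 1)) G)"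
  using assms
proof (induction A rule: finite_induct)
  case empty
  show ?case
  proof (intro exI conjI allI impI)
    show "finite {\<lambda>_::'i \<Rightarrow> complex. 1::complex}" by simp
    show "(\<lambda>_. 1) \<in> zpoly S" by (rule zpoly_const)
    show "\<exists>p\<in>Z. (1::complex) \<noteq> 0" using empty by auto
    fix k :: nat and \<alpha> :: "'a \<Rightarrow> nat"
    have "zero_outside Z (\<lambda>_. 1) \<in> mspan Z S (0 * (k + 1)) {\<lambda>_. 1}" by (rule mspan_gen) simp
    then show "zero_outside Z (\<lambda>p. 1 ^ k * (\<Prod>a\<in>{}. y a p ^ \<alpha> a)) \<in> mspan Z S (0 * (k + 1)) {\<lambda>_. 1}" by simp
  qed
next
  case (insert a A)
  then obtain G1 L1 c1 where I1: "finite G1" "L1 \<in> zpoly S" "\<exists>p\<in>Z. L1 p \<noteq> 0"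
    "\<forall>k \<alpha>. (\<forall>a\<in>A. \<alpha> a \<le> k) \<longrightarrow> zero_outside Z (\<lambda>p. L1 p ^ k * (\<Prod>a\<in>A. y a p ^ \<alpha> a)) \<in> mspan Z S (c1 * (k + 1)) G1"
    by auto
  obtain Ga La ca where Ia: "finite Ga" "La \<in> zpoly S" "\<exists>p\<in>Z. La p \<noteq> 0"
    "\<forall>k j. j \<le> k \<longrightarrow> zero_outside Z (\<lambda>p. La p ^ k * y a p ^ j) \<in> mspan Z S (ca * (k + 1)) Ga"
    using insert.prems(4) unfolding alg_bounded_def by auto
  show ?case
  proof (intro exI conjI allI impI)
    show "finite (set_mult G1 Ga)" using I1 Ia by (simp add: finite_set_mult)
    show "(\<lambda>p. L1 p * La p) \<in> zpoly S" using I1 Ia by (simp add: zpoly_mult)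
    show "\<exists>p\<in>Z. L1 p * La p \<noteq> 0"
      by (rule zdomain_mult_nonzero[OF insert.prems(2)]) (use I1 Ia insert.prems(3) zpoly_mono in auto)
    fix k :: nat and \<alpha> :: "'a \<Rightarrow> nat" assume H: "\<forall>b\<in>insert a A. \<alpha> b \<le> k"
    have "zero_outside Z (\<lambda>p. L1 p ^ k * (\<Prod>a\<in>A. y a p ^ \<alpha> a)) * zero_outside Z (\<lambda>p. La p ^ k * y a p ^ \<alpha> a)
       \<in> mspan Z S (c1 * (k + 1) + ca * (k + 1)) (set_mult G1 Ga)"
      by (rule mspan_mult) (use I1 Ia H in auto)
    moreover have "zero_outside Z (\<lambda>p. L1 p ^ k * (\<Prod>a\<in>A. y a p ^ \<alpha> a)) * zero_outside Z (\<lambda>p. La p ^ k * y a p ^ \<alpha> a)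
      = zero_outside Z (\<lambda>p. (L1 p * La p) ^ k * (\<Prod>a\<in>insert a A. y a p ^ \<alpha> a))"
      using insert.hyps by (auto simp: zero_outside_def fun_eq_iff power_mult_distrib algebra_simps)
    ultimately show "zero_outside Z (\<lambda>p. (L1 p * La p) ^ k * (\<Prod>a\<in>insert a A. y a p ^ \<alpha> a)) \<in> mspan Z S ((c1 + ca) * (k + 1)) (set_mult G1 Ga)"
      by (simp add: algebra_simps)
  qed
qed

lemma counting_ineq:
  fixes c K d N :: nat
  assumes "d < N"
  defines "D \<equiv> (c + 1) ^ d * K"
  shows "(c * (D + 1) + 1) ^ d * K < (D + 1) ^ N"
proof -
  have "c * (D + 1) + 1 \<le> (c + 1) * (D + 1)" by simp
  then have "(c * (D + 1) + 1) ^ d \<le> ((c + 1) * (D + 1)) ^ d" by (rule power_mono) simp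
  then have "(c * (D + 1) + 1) ^ d * K \<le> ((c + 1) * (D + 1)) ^ d * K"
    by (rule mult_right_mono) simp
  also have "\<dots> = (c + 1) ^ d * (D + 1) ^ d * K" by (simp only: power_mult_distrib)
  also have "\<dots> = D * (D + 1) ^ d" unfolding D_def by simp
  also have "\<dots> < (D + 1) * (D + 1) ^ d" by simp
  also have "\<dots> = (D + 1) ^ Suc d" by simp
  also have "\<dots> \<le> (D + 1) ^ N" by (rule power_increasing) (use assms in auto)
  finally show ?thesis .
qed

lemma alg_dependent_explicit:
  fixes y :: "'a \<Rightarrow> ('i \<Rightarrow> complex) \<Rightarrow> complex"
  assumes A: "finite A" and S: "finite S" and card: "card S < card A" and SI: "S \<subseteq> I"
    and dom: "zdomain I Z" and Z: "Z \<noteq> {}"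
    and y_alg: "\<forall>a\<in>A. alg_bounded Z S (y a)" and zp: "\<forall>a\<in>A. y a \<in> zpoly I"
  shows "\<exists>D u. (\<exists>\<alpha>\<in>PiE A (\<lambda>_. {..D}). u \<alpha> \<noteq> (0::complex)) \<and>
     (\<forall>p\<in>Z. (\<Sum>\<alpha>\<in>PiE A (\<lambda>_. {..D}). u \<alpha> * (\<Prod>a\<in>A. y a p ^ \<alpha> a)) = 0)"
proof -
  obtain G L c where M: "finite G" "L \<in> zpoly S" "\<exists>p\<in>Z. L p \<noteq> 0"
    "\<forall>k \<alpha>. (\<forall>a\<in>A. \<alpha> a \<le> k) \<longrightarrow> zero_outside Z (\<lambda>p. L p ^ k * (\<Prod>a\<in>A. y a p ^ \<alpha> a)) \<in> mspan Z S (c * (k + 1)) G"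
    using alg_bounded_prod_powers[OF A Z dom SI y_alg] by blast
  define D where "D = (c + 1) ^ card S * card G"
  define X where "X = PiE A (\<lambda>_. {..D})"
  define h where "h \<alpha> = zero_outside Z (\<lambda>p. L p ^ D * (\<Prod>a\<in>A. y a p ^ \<alpha> a))" for \<alpha>
  have sp: "\<forall>\<alpha>\<in>X. h \<alpha> \<in> fun_vs.span (mspan_gens Z S (c * (D + 1)) G)"
  proof
    fix \<alpha> assume "\<alpha> \<in> X"
    then have "\<forall>a\<in>A. \<alpha> a \<le> D" unfolding X_def by (auto simp: PiE_def Pi_def)
    then have "h \<alpha> \<in> mspan Z S (c * (D + 1)) G" unfolding h_def using M(4) by blast
    then show "h \<alpha> \<in> fun_vs.span (mspan_gens Z S (c * (D + 1)) G)" unfolding mspan_def .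
  qed
  have cX: "card X = (D + 1) ^ card A" unfolding X_def using A by (simp add: card_PiE)
  have "card (mspan_gens Z S (c * (D + 1)) G) \<le> (c * (D + 1) + 1) ^ card S * card G"
    by (rule card_mspan_gens_le[OF S M(1)])
  also have "\<dots> < (D + 1) ^ card A" unfolding D_def by (rule counting_ineq[OF card])
  finally have ccmp: "card (mspan_gens Z S (c * (D + 1)) G) < card X" using cX by simp
  obtain u where u: "\<exists>\<alpha>\<in>X. u \<alpha> \<noteq> 0" "(\<Sum>\<alpha>\<in>X. fun_scale (u \<alpha>) (h \<alpha>)) = 0"
    using span_card_lt_dependent[OF _ finite_mspan_gens[OF S M(1)] ccmp sp] A unfolding X_def by (auto intro: finite_PiE)
  define P where "P q = (\<Sum>\<alpha>\<in>X. u \<alpha> * (\<Prod>a\<in>A. q a ^ \<alpha> a))" for q :: "'a \<Rightarrow> complex"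
  define Pf where "Pf p = (\<Sum>\<alpha>\<in>X. u \<alpha> * (\<Prod>a\<in>A. y a p ^ \<alpha> a))" for p
  have PA: "P \<in> zpoly A" unfolding P_def[abs_def]
    by (intro zpoly_sum zpoly_mult zpoly_const zpoly_prod zpoly_pow zpoly_var) (auto simp: X_def A intro: finite_PiE)
  have PfI: "Pf \<in> zpoly I" unfolding Pf_def[abs_def]
    by (intro zpoly_sum zpoly_mult zpoly_const zpoly_prod zpoly_pow) (use zp in \<open>auto simp: X_def A intro: finite_PiE\<close>)
  have LD: "(\<lambda>p. L p ^ D) \<in> zpoly I" using M(2) SI zpoly_mono zpoly_pow by blast
  have prodZ: "\<forall>p\<in>Z. L p ^ D * Pf p = 0"
  proof
    fix p assume p: "p \<in> Z"
    have "(\<Sum>\<alpha>\<in>X. fun_scale (u \<alpha>) (h \<alpha>)) p = 0" using u(2) by simp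
    then show "L p ^ D * Pf p = 0"
      unfolding sum_fun_apply h_def Pf_def using p by (simp add: zero_outside_def sum_distrib_left algebra_simps)
  qed
  have "(\<forall>p\<in>Z. L p ^ D = 0) \<or> (\<forall>p\<in>Z. Pf p = 0)"
    using dom LD PfI prodZ unfolding zdomain_def by blast
  moreover have "\<not> (\<forall>p\<in>Z. L p ^ D = 0)" using M(3) by auto
  ultimately have Pf0: "\<forall>p\<in>Z. Pf p = 0" by blast
  then show ?thesis using u(1) unfolding Pf_def X_def by blast
qed

lemma alg_dependent:
  fixes y :: "'a \<Rightarrow> ('i \<Rightarrow> complex) \<Rightarrow> complex"
  assumes A: "finite A" and S: "finite S" and card: "card S < card A" and SI: "S \<subseteq> I"
    and dom: "zdomain I Z" and Z: "Z \<noteq> {}"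
    and y_alg: "\<forall>a\<in>A. alg_bounded Z S (y a)" and zp: "\<forall>a\<in>A. y a \<in> zpoly I"
  shows "\<exists>P\<in>zpoly A. (\<exists>q. P q \<noteq> 0) \<and> (\<forall>p\<in>Z. P (\<lambda>a. y a p) = 0)"
proof -
  obtain D u where u: "\<exists>\<alpha>\<in>PiE A (\<lambda>_. {..D}). u \<alpha> \<noteq> (0::complex)"
     "\<forall>p\<in>Z. (\<Sum>\<alpha>\<in>PiE A (\<lambda>_. {..D}). u \<alpha> * (\<Prod>a\<in>A. y a p ^ \<alpha> a)) = 0"
    using alg_dependent_explicit[OF assms] by blast
  define X where "X = PiE A (\<lambda>_. {..D})"
  define P where "P q = (\<Sum>\<alpha>\<in>X. u \<alpha> * (\<Prod>a\<in>A. q a ^ \<alpha> a))" for q :: "'a \<Rightarrow> complex"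
  have PA: "P \<in> zpoly A" unfolding P_def[abs_def]
    by (intro zpoly_sum zpoly_mult zpoly_const zpoly_prod zpoly_pow zpoly_var) (auto simp: X_def A intro: finite_PiE)
  have "\<exists>q. P q \<noteq> 0"
  proof (rule ccontr)
    assume "\<not> (\<exists>q. P q \<noteq> 0)"
    then have "\<forall>q. (\<Sum>\<alpha>\<in>PiE A (\<lambda>_. {..D}). u \<alpha> * (\<Prod>a\<in>A. q a ^ \<alpha> a)) = 0"
      unfolding P_def X_def by simp
    then have "\<forall>\<alpha>\<in>X. u \<alpha> = 0" using monomial_coeffs_eq_0[OF A] unfolding X_def by blast
    then show False using u(1) unfolding X_def by blast
  qed
  moreover have "\<forall>p\<in>Z. P (\<lambda>a. y a p) = 0" using u(2) unfolding P_def X_def by simp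
  ultimately show ?thesis using PA by blast
qed

section \<open>Algebraic independence and chains of irreducible sets\<close>

lemma power_fun_apply: "((g :: 'x \<Rightarrow> 'b::comm_ring_1) ^ k) p = g p ^ k"
  by (induction k) auto

lemma poly_fun_apply: "(poly (Q :: ('x \<Rightarrow> 'b::comm_ring_1) poly) g) p = (\<Sum>k\<le>degree Q. coeff Q k p * g p ^ k)"
  unfolding poly_altdef sum_fun_apply by (simp add: power_fun_apply)

lemma coeff_pCons_0_zpoly: "g \<in> zpoly S \<Longrightarrow> coeff [:g:] k \<in> zpoly S"
  by (cases k) (auto intro: zpoly.zpoly_const simp: zero_fun_def)

lemma zpoly_insert_poly:
  "g \<in> zpoly (insert c S) \<Longrightarrow> \<exists>Q. (\<forall>k. coeff Q k \<in> zpoly S) \<and> g = poly Q (\<lambda>p. p c)"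
proof (induction rule: zpoly.induct)
  case (zpoly_const a)
  have "(\<lambda>_. a) \<in> zpoly S" by (rule zpoly.zpoly_const)
  then show ?case by (intro exI[of _ "[:\<lambda>_. a:]"]) (simp add: coeff_pCons_0_zpoly)
next
  case (zpoly_var i)
  show ?case
  proof (cases "i = c")
    case True
    have "coeff [:0, 1:] k \<in> zpoly S" for k
      by (cases k) (auto intro: zpoly.zpoly_const simp: zero_fun_def one_fun_def coeff_pCons split: nat.splits)
    then show ?thesis using True by (intro exI[of _ "[:0, 1:]"]) (simp add: fun_eq_iff)
  next
    case False
    then have "(\<lambda>p. p i) \<in> zpoly S" using zpoly_var by (auto intro: zpoly.zpoly_var)
    then show ?thesis by (intro exI[of _ "[:\<lambda>p. p i:]"]) (simp add: coeff_pCons_0_zpoly)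
  qed
next
  case (zpoly_add f g)
  then obtain Q1 Q2 where Q: "\<forall>k. coeff Q1 k \<in> zpoly S" "f = poly Q1 (\<lambda>p. p c)"
    "\<forall>k. coeff Q2 k \<in> zpoly S" "g = poly Q2 (\<lambda>p. p c)" by blast
  show ?case
  proof (intro exI conjI allI)
    show "coeff (Q1 + Q2) k \<in> zpoly S" for k
      using Q zpoly.zpoly_add[of "coeff Q1 k" S "coeff Q2 k"] by (simp add: plus_fun_def)
    show "(\<lambda>p. f p + g p) = poly (Q1 + Q2) (\<lambda>p. p c)" using Q by (simp add: fun_eq_iff)
  qed
next
  case (zpoly_mult f g)
  then obtain Q1 Q2 where Q: "\<forall>k. coeff Q1 k \<in> zpoly S" "f = poly Q1 (\<lambda>p. p c)"
    "\<forall>k. coeff Q2 k \<in> zpoly S" "g = poly Q2 (\<lambda>p. p c)" by blast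
  show ?case
  proof (intro exI conjI allI)
    show "coeff (Q1 * Q2) k \<in> zpoly S" for k
    proof -
      have "(\<lambda>p. \<Sum>i\<le>k. coeff Q1 i p * coeff Q2 (k - i) p) \<in> zpoly S"
        by (intro zpoly_sum zpoly.zpoly_mult) (use Q in auto)
      moreover have "coeff (Q1 * Q2) k = (\<lambda>p. \<Sum>i\<le>k. coeff Q1 i p * coeff Q2 (k - i) p)"
        unfolding coeff_mult by (simp add: fun_eq_iff sum_fun_apply)
      ultimately show ?thesis by simp
    qed
    show "(\<lambda>p. f p * g p) = poly (Q1 * Q2) (\<lambda>p. p c)" using Q by (simp add: fun_eq_iff)
  qed
qed

definition alg_indep :: "('i \<Rightarrow> complex) set \<Rightarrow> 'i set \<Rightarrow> bool" where
  "alg_indep Z S \<longleftrightarrow> (\<forall>g\<in>zpoly S. (\<forall>p\<in>Z. g p = 0) \<longrightarrow> (\<forall>p. g p = 0))"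

lemma alg_indep_nonzero: "alg_indep Z S \<Longrightarrow> L \<in> zpoly S \<Longrightarrow> \<exists>q. L q \<noteq> 0 \<Longrightarrow> \<exists>p\<in>Z. L p \<noteq> 0"
  unfolding alg_indep_def by blast

text \<open>Cancelling powers of f (no zero divisors on Z), the lowest nonzero coefficient of an
  algebraic relation for f is a multiple of f on Z.\<close>

lemma relation_imp_divides:
  assumes dom: "zdomain I Z" and fX: "f \<in> zpoly X" and XI: "X \<subseteq> I" and SX: "S \<subseteq> X"
    and fnz: "\<exists>p\<in>Z. f p \<noteq> 0"
    and C: "\<forall>i. C i \<in> zpoly S" "\<exists>i\<le>D. \<exists>q. C i q \<noteq> 0" "\<forall>p\<in>Z. (\<Sum>i\<le>D. C i p * f p ^ i) = 0"
  shows "\<exists>L b. L \<in> zpoly S \<and> (\<exists>q. L q \<noteq> 0) \<and> b \<in> zpoly X \<and> (\<forall>p\<in>Z. L p = f p * b p)"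
  using C
proof (induction D arbitrary: C)
  case 0
  then show ?case by (intro exI[of _ "C 0"] exI[of _ "\<lambda>_. 0"]) (auto intro: zpoly_const)
next
  case (Suc D)
  define g where "g p = (\<Sum>i\<le>D. C (Suc i) p * f p ^ i)" for p
  have "C (Suc i) \<in> zpoly X" for i using Suc.prems(1) SX zpoly_mono by blast
  then have gX: "g \<in> zpoly X" unfolding g_def[abs_def]
    by (intro zpoly_sum zpoly.zpoly_mult zpoly_pow fX) auto
  have rel: "\<forall>p\<in>Z. C 0 p + f p * g p = 0"
    using Suc.prems(3) unfolding sum.atMost_Suc_shift g_def by (simp add: sum_distrib_left algebra_simps)
  show ?case
  proof (cases "\<exists>q. C 0 q \<noteq> 0")
    case True
    show ?thesis
    proof (rule exI[of _ "C 0"], rule exI[of _ "\<lambda>p. - g p"], intro conjI)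
      show "C 0 \<in> zpoly S" using Suc.prems(1) by blast
      show "(\<lambda>p. - g p) \<in> zpoly X" by (rule zpoly_neg[OF gX])
      show "\<forall>p\<in>Z. C 0 p = f p * - g p" using rel by (auto simp: eq_neg_iff_add_eq_0)
    qed (rule True)
  next
    case False
    then have "\<forall>p\<in>Z. f p * g p = 0" using rel by simp
    moreover have "f \<in> zpoly I" "g \<in> zpoly I" using fX gX XI zpoly_mono by auto
    ultimately have "\<forall>p\<in>Z. g p = 0" using dom fnz unfolding zdomain_def by blast
    moreover obtain i q where "i \<le> Suc D" "C i q \<noteq> 0" using Suc.prems(2) by blast
    then have "\<exists>i\<le>D. \<exists>q. C (Suc i) q \<noteq> 0" using False by (cases i) auto
    ultimately show ?thesis using Suc.IH[of "\<lambda>i. C (Suc i)"] Suc.prems(1) unfolding g_def by blast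
  qed
qed

lemma alg_bounded_imp_relation:
  assumes S: "finite S" and SI: "S \<subseteq> I" and dom: "zdomain I Z" and Z: "Z \<noteq> {}"
    and fI: "f \<in> zpoly I" and f_alg: "alg_bounded Z S f"
  shows "\<exists>D C. (\<forall>i. C i \<in> zpoly S) \<and> (\<exists>i\<le>D. \<exists>q. C i q \<noteq> 0) \<and> (\<forall>p\<in>Z. (\<Sum>i\<le>D. C i p * f p ^ i) = 0)"
proof -
  define A where "A = insert None (Some ` S)"
  define y where "y ob = (case ob of None \<Rightarrow> f | Some s \<Rightarrow> (\<lambda>p. p s))" for ob
  have A: "finite A" "card S < card A" using S by (simp_all add: A_def card_image)
  have y_alg: "\<forall>a\<in>A. alg_bounded Z S (y a)" using f_alg alg_bounded_var[OF Z _ S] by (auto simp: A_def y_def)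
  have zp: "\<forall>a\<in>A. y a \<in> zpoly I" using fI SI by (auto simp: A_def y_def intro: zpoly.zpoly_var)
  obtain P where P: "P \<in> zpoly A" "\<exists>q. P q \<noteq> 0" "\<forall>p\<in>Z. P (\<lambda>a. y a p) = 0"
    using alg_dependent[OF A(1) S A(2) SI dom Z y_alg zp] by blast
  obtain Q where Q: "\<forall>k. coeff Q k \<in> zpoly (Some ` S)" "P = poly Q (\<lambda>q. q None)"
    using zpoly_insert_poly[OF P(1)[unfolded A_def]] by blast
  define C where "C i p = coeff Q i (\<lambda>ob. case ob of None \<Rightarrow> 0 | Some s \<Rightarrow> p s)" for i p
  have "C i \<in> zpoly S" for i
    unfolding C_def[abs_def] by (rule zpoly_comp[OF Q(1)[rule_format]]) (auto intro: zpoly.intros)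
  moreover have C: "C i (\<lambda>s. q (Some s)) = coeff Q i q" for i q
    unfolding C_def by (rule zpoly_agree[OF Q(1)[rule_format]]) auto
  have "\<exists>i\<le>degree Q. \<exists>q. C i q \<noteq> 0"
  proof -
    obtain q where q: "P q \<noteq> 0" using P(2) by blast
    have "\<not> (\<forall>i\<le>degree Q. coeff Q i q = 0)"
    proof
      assume "\<forall>i\<le>degree Q. coeff Q i q = 0"
      then have "P q = 0" unfolding Q(2) poly_fun_apply by simp
      with q show False by contradiction
    qed
    then obtain i where "i \<le> degree Q" "coeff Q i q \<noteq> 0" by blast
    moreover have "C i (\<lambda>s. q (Some s)) \<noteq> 0" using C[of i q] \<open>coeff Q i q \<noteq> 0\<close> by simp
    ultimately show ?thesis by blast
  qed
  moreover have "\<forall>p\<in>Z. (\<Sum>i\<le>degree Q. C i p * f p ^ i) = 0"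
  proof
    fix p assume "p \<in> Z"
    have Cy: "C i p = coeff Q i (\<lambda>a. y a p)" for i using C[of i "\<lambda>a. y a p"] by (simp add: y_def)
    have "y None p = f p" by (simp add: y_def)
    moreover have "P (\<lambda>a. y a p) = 0" using P(3) \<open>p \<in> Z\<close> by blast
    ultimately show "(\<Sum>i\<le>degree Q. C i p * f p ^ i) = 0"
      unfolding Q(2) poly_fun_apply Cy by simp
  qed
  ultimately show ?thesis by blast
qed

lemma alg_bounded_divides:
  assumes S: "finite S" and SX: "S \<subseteq> X" and XI: "X \<subseteq> I" and dom: "zdomain I Z" and Z: "Z \<noteq> {}"
    and fX: "f \<in> zpoly X" and f_alg: "alg_bounded Z S f" and fnz: "\<exists>p\<in>Z. f p \<noteq> 0"
  shows "\<exists>L b. L \<in> zpoly S \<and> (\<exists>q. L q \<noteq> 0) \<and> b \<in> zpoly X \<and> (\<forall>p\<in>Z. L p = f p * b p)"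
proof -
  have fI: "f \<in> zpoly I" using fX XI zpoly_mono by blast
  obtain D C where DC: "\<forall>i. C i \<in> zpoly S" "\<exists>i\<le>D. \<exists>q. C i q \<noteq> 0" "\<forall>p\<in>Z. (\<Sum>i\<le>D. C i p * f p ^ i) = 0"
    using alg_bounded_imp_relation[OF S _ dom Z fI f_alg] SX XI by blast
  show ?thesis using relation_imp_divides[OF dom fX XI SX fnz DC] by blast
qed

lemma alg_bounded_of_dependent:
  assumes S: "finite S" and ind: "alg_indep Z S" and g: "g \<in> zpoly (insert c S)"
    and gnz: "\<exists>q. g q \<noteq> 0" and gZ: "\<forall>p\<in>Z. g p = 0"
  shows "alg_bounded Z S (\<lambda>p. p c)"
proof -
  obtain Q where Q: "\<forall>k. coeff Q k \<in> zpoly S" "g = poly Q (\<lambda>p. p c)"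
    using zpoly_insert_poly[OF g] by blast
  define e where "e = degree Q"
  have "Q \<noteq> 0" using gnz Q(2) by auto
  then have "coeff Q e \<noteq> 0" unfolding e_def by simp
  then have nz: "\<exists>p\<in>Z. coeff Q e p \<noteq> 0"
    using alg_indep_nonzero[OF ind] Q(1) by (auto simp: fun_eq_iff)
  have rel: "\<forall>p\<in>Z. coeff Q e p * p c ^ e = (\<Sum>k<e. (\<lambda>p. - coeff Q k p) p * p c ^ k)"
  proof
    fix p assume "p \<in> Z"
    then have "(\<Sum>k\<le>e. coeff Q k p * p c ^ k) = 0"
      using gZ unfolding Q(2) poly_fun_apply e_def by simp
    then have "(\<Sum>k<e. coeff Q k p * p c ^ k) + coeff Q e p * p c ^ e = 0"
      by (simp add: lessThan_Suc_atMost[symmetric])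
    then show "coeff Q e p * p c ^ e = (\<Sum>k<e. (\<lambda>p. - coeff Q k p) p * p c ^ k)"
      by (simp add: sum_negf eq_neg_iff_add_eq_0 add.commute)
  qed
  show ?thesis
    by (rule alg_bounded_of_relation[OF S Q(1)[rule_format] nz _ rel]) (use Q(1) in \<open>auto intro: zpoly_neg\<close>)
qed

lemma alg_indep_mono: "alg_indep Z S \<Longrightarrow> Z \<subseteq> Z' \<Longrightarrow> alg_indep Z' S"
  unfolding alg_indep_def by blast

text \<open>Otherwise every coordinate, hence every polynomial f, is algebraic over S on Z'. Taking f
  vanishing on Z but not on Z', some nonzero S-polynomial L = f b on Z' vanishes on Z,
  contradicting the independence of S on Z.\<close>

lemma alg_indep_extend:
  assumes I: "finite I" and Zi: "zirreducible I Z" and Z'i: "zirreducible I Z'"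
    and sub: "Z \<subseteq> Z'" and ne: "Z \<noteq> Z'" and SI: "S \<subseteq> I" and ind: "alg_indep Z S"
  shows "\<exists>c\<in>I - S. alg_indep Z' (insert c S)"
proof (rule ccontr)
  assume no_extension: "\<not> (\<exists>c\<in>I - S. alg_indep Z' (insert c S))"
  have S: "finite S" using I SI finite_subset by blast
  have dom: "zdomain I Z'" by (rule zirreducible_imp_zdomain[OF Z'i])
  have Z'ne: "Z' \<noteq> {}" using Z'i unfolding zirreducible_def by blast
  have ind': "alg_indep Z' S" by (rule alg_indep_mono[OF ind sub])
  have coords: "\<forall>c\<in>I. alg_bounded Z' S (\<lambda>p. p c)"
  proof
    fix c assume c: "c \<in> I"
    show "alg_bounded Z' S (\<lambda>p. p c)"
    proof (cases "c \<in> S")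
      case True then show ?thesis using alg_bounded_var[OF Z'ne True S] by simp
    next
      case False
      then have "\<not> alg_indep Z' (insert c S)" using no_extension c by blast
      then obtain g where g: "g \<in> zpoly (insert c S)" "\<forall>p\<in>Z'. g p = 0" "\<exists>q. g q \<noteq> 0"
        unfolding alg_indep_def by blast
      show ?thesis by (rule alg_bounded_of_dependent[OF S ind' g(1) g(3) g(2)])
    qed
  qed
  obtain F where F: "F \<subseteq> zpoly I" "Z = {p \<in> cspace I. \<forall>f\<in>F. f p = 0}"
    using Zi unfolding zirreducible_def zclosed_def by blast
  have Z'c: "Z' \<subseteq> cspace I" using Z'i zclosed_subset_cspace unfolding zirreducible_def by blast
  obtain p0 where p0: "p0 \<in> Z'" "p0 \<notin> Z" using sub ne by blast
  then obtain f where f: "f \<in> F" "f p0 \<noteq> 0" using F(2) Z'c by blast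
  have fI: "f \<in> zpoly I" using f F by blast
  have fZ: "\<forall>p\<in>Z. f p = 0" using f F by blast
  have f_alg: "alg_bounded Z' S f" by (rule alg_bounded_zpoly[OF fI Z'ne dom SI]) (use coords in blast)
  obtain L b where Lb: "L \<in> zpoly S" "\<exists>q. L q \<noteq> 0" "b \<in> zpoly I" "\<forall>p\<in>Z'. L p = f p * b p"
    using alg_bounded_divides[OF S SI order_refl dom Z'ne fI f_alg] p0 f by blast
  have "\<forall>p\<in>Z. L p = 0" using Lb(4) fZ sub by auto
  then have "\<forall>p. L p = 0" using ind Lb(1) unfolding alg_indep_def by blast
  then show False using Lb(2) by blast
qed

lemma alg_indep_card_le:
  assumes I: "finite I" and TI: "T \<subseteq> I" and dom: "zdomain I V" and V: "V \<noteq> {}"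
    and coords: "\<forall>c\<in>I. alg_bounded V T (\<lambda>p. p c)" and SI: "S \<subseteq> I" and ind: "alg_indep V S"
  shows "card S \<le> card T"
proof (rule ccontr)
  assume "\<not> card S \<le> card T"
  then have lt: "card T < card S" by simp
  have S: "finite S" "finite T" using I SI TI finite_subset by blast+
  obtain P where P: "P \<in> zpoly S" "\<exists>q. P q \<noteq> 0" "\<forall>p\<in>V. P (\<lambda>a. p a) = 0"
    using alg_dependent[OF S(1) S(2) lt TI dom V, of "\<lambda>a p. p a"] coords SI by (auto intro: zpoly.zpoly_var)
  have "\<forall>p. P p = 0" using ind P(1) P(3) unfolding alg_indep_def by auto
  then show False using P(2) by blast
qed

lemma alg_indep_empty: "Z \<noteq> {} \<Longrightarrow> alg_indep Z {}"
  unfolding alg_indep_def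
proof (intro ballI impI allI)
  fix g :: "('a \<Rightarrow> complex) \<Rightarrow> complex" and p
  assume "Z \<noteq> {}" "g \<in> zpoly {}" "\<forall>p\<in>Z. g p = 0"
  then obtain z where "z \<in> Z" by blast
  have "g p = g z" by (rule zpoly_agree[OF \<open>g \<in> zpoly {}\<close>]) simp
  then show "g p = 0" using \<open>z \<in> Z\<close> \<open>\<forall>p\<in>Z. g p = 0\<close> by simp
qed

lemma zchain_length_le:
  assumes I: "finite I" and ch: "zchain I V k"
    and bound: "\<forall>S. S \<subseteq> I \<longrightarrow> alg_indep V S \<longrightarrow> card S \<le> n"
  shows "k \<le> n"
proof -
  obtain Z where Z: "\<forall>i\<le>k. zirreducible I (Z i) \<and> Z i \<subseteq> V" "\<forall>i<k. Z i \<subset> Z (Suc i)"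
    using ch unfolding zchain_def by blast
  have "\<forall>i\<le>k. \<exists>S\<subseteq>I. alg_indep (Z i) S \<and> card S \<ge> i"
  proof (intro allI impI)
    fix i assume "i \<le> k"
    then show "\<exists>S\<subseteq>I. alg_indep (Z i) S \<and> card S \<ge> i"
    proof (induction i)
      case 0
      have "Z 0 \<noteq> {}" using Z(1) unfolding zirreducible_def by auto
      then show ?case using alg_indep_empty by blast
    next
      case (Suc i)
      then obtain S where S: "S \<subseteq> I" "alg_indep (Z i) S" "card S \<ge> i" by auto
      have ss: "Z i \<subset> Z (Suc i)" using Z(2) Suc.prems by simp
      have "\<exists>c\<in>I - S. alg_indep (Z (Suc i)) (insert c S)"
        by (rule alg_indep_extend[OF I _ _ _ _ S(1) S(2)]) (use Z(1) Suc.prems ss in auto)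
      then obtain c where c: "c \<in> I - S" "alg_indep (Z (Suc i)) (insert c S)" by blast
      have "finite S" using I S(1) finite_subset by blast
      then have "card (insert c S) = Suc (card S)" using c(1) by simp
      then show ?case using c S by (intro exI[of _ "insert c S"]) auto
    qed
  qed
  then obtain S where S: "S \<subseteq> I" "alg_indep (Z k) S" "card S \<ge> k" by blast
  have "alg_indep V S" using alg_indep_mono[OF S(2)] Z(1) by blast
  then have "card S \<le> n" using bound S(1) by blast
  then show ?thesis using S(3) by simp
qed

section \<open>The tower variety\<close>

lemma psi_Inl [simp]: "psi m \<delta> t (Inl k) = t $ k" unfolding psi_def by simp
lemma psi_Inr [simp]: "psi m \<delta> t (Inr i) = (if i < m then \<delta> i t else 0)" unfolding psi_def by simp

lemma finite_tower_idx: "finite (tower_idx m :: ('n::finite + nat) set)"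
  unfolding tower_idx_def by simp

lemma psi_cspace: "psi m \<delta> t \<in> cspace (tower_idx m)"
  unfolding cspace_def tower_idx_def
proof (intro CollectI allI impI)
  fix i :: "'a + nat" assume "i \<notin> range Inl \<union> Inr ` {..<m}"
  then show "psi m \<delta> t i = 0" by (cases i) auto
qed

lemma mholo_on_psi:
  assumes "open U" "\<forall>i<m. mholo_on U (\<delta> i)" "c \<in> tower_idx m"
  shows "mholo_on U (\<lambda>t. psi m \<delta> t c)"
  using assms mholo_on_component[OF assms(1)] unfolding tower_idx_def by auto

lemma mholo_on_zpoly_psi:
  assumes "open U" "\<forall>i<m. mholo_on U (\<delta> i)" "g \<in> zpoly (tower_idx m)"
  shows "mholo_on U (\<lambda>t. g (psi m \<delta> t))"
  by (rule mholo_on_zpoly[OF assms(1,3)]) (use mholo_on_psi[OF assms(1,2)] in auto)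

lemma zdomain_psi_image:
  assumes U: "open U" "connected U" and holo: "\<forall>i<m. mholo_on U (\<delta> i)"
  shows "zdomain (tower_idx m) (psi m \<delta> ` U)"
  unfolding zdomain_def
proof (intro allI impI)
  fix g h assume g: "g \<in> zpoly (tower_idx m)" and h: "h \<in> zpoly (tower_idx m)"
    and gh: "\<forall>p\<in>psi m \<delta> ` U. g p * h p = 0"
  have "(\<forall>t\<in>U. g (psi m \<delta> t) = 0) \<or> (\<forall>t\<in>U. h (psi m \<delta> t) = 0)"
    by (rule mholo_on_mult_eq_0[OF U(2) mholo_on_zpoly_psi[OF U(1) holo g] mholo_on_zpoly_psi[OF U(1) holo h]])
      (use gh in auto)
  then show "(\<forall>p\<in>psi m \<delta> ` U. g p = 0) \<or> (\<forall>p\<in>psi m \<delta> ` U. h p = 0)" by auto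
qed

lemma zdomain_psi_slice:
  assumes U: "open U" and PDU: "polydisc a r \<subseteq> U" and r: "r > 0" and holo: "\<forall>i<m. mholo_on U (\<delta> i)"
  shows "zdomain (tower_idx m) (psi m \<delta> ` polydisc_slice a r a J)"
  unfolding zdomain_def
proof (intro allI impI)
  fix g h assume g: "g \<in> zpoly (tower_idx m)" and h: "h \<in> zpoly (tower_idx m)"
    and gh: "\<forall>p\<in>psi m \<delta> ` polydisc_slice a r a J. g p * h p = 0"
  have "(\<forall>t\<in>polydisc_slice a r a J. g (psi m \<delta> t) = 0) \<or> (\<forall>t\<in>polydisc_slice a r a J. h (psi m \<delta> t) = 0)"
    by (rule mholo_on_mult_eq_0_slice[OF PDU r mholo_on_zpoly_psi[OF U holo g] mholo_on_zpoly_psi[OF U holo h]])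
      (use gh in auto)
  then show "(\<forall>p\<in>psi m \<delta> ` polydisc_slice a r a J. g p = 0) \<or> (\<forall>p\<in>psi m \<delta> ` polydisc_slice a r a J. h p = 0)" by auto
qed

lemma zirreducible_zclosure_psi:
  assumes "A \<noteq> {}" "zdomain (tower_idx m) (psi m \<delta> ` A)"
  shows "zirreducible (tower_idx m) (zclosure (tower_idx m) (psi m \<delta> ` A))"
  by (rule zdomain_imp_zirreducible_zclosure) (use assms psi_cspace in auto)

lemma tower_idx_0: "tower_idx 0 = range Inl" unfolding tower_idx_def by simp
lemma tower_idx_Suc: "tower_idx (Suc i) = insert (Inr i) (tower_idx i)"
  unfolding tower_idx_def by (auto simp: lessThan_Suc)
lemma tower_idx_mono: "i \<le> j \<Longrightarrow> tower_idx i \<subseteq> tower_idx j"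
  unfolding tower_idx_def by auto

lemma alg_indep_params:
  fixes U :: "(complex ^ 'n) set"
  assumes U: "open U" "U \<noteq> {}"
  shows "alg_indep (zclosure (tower_idx m) (psi m \<delta> ` U)) (range Inl)"
  unfolding alg_indep_def
proof (intro ballI impI allI)
  fix g :: "('n + nat \<Rightarrow> complex) \<Rightarrow> complex" and p :: "'n + nat \<Rightarrow> complex"
  assume g: "g \<in> zpoly (range Inl)" and gV: "\<forall>p\<in>zclosure (tower_idx m) (psi m \<delta> ` U). g p = 0"
  have gU: "\<forall>t\<in>U. g (psi m \<delta> t) = 0" using gV zclosure_superset by blast
  define \<phi> where "\<phi> t = (\<lambda>c::'n + nat. case c of Inl k \<Rightarrow> t $ k | Inr _ \<Rightarrow> 0)" for t :: "complex ^ 'n"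
  define G where "G t = g (\<phi> t)" for t
  have Gpsi: "G t = g (psi m \<delta> t)" for t
    unfolding G_def by (rule zpoly_agree[OF g]) (auto simp: \<phi>_def)
  have G_holo: "mholo_on UNIV G" unfolding G_def
    by (rule mholo_on_zpoly[OF open_UNIV g]) (auto simp: \<phi>_def mholo_on_component)
  obtain a where a: "a \<in> U" using U(2) by blast
  obtain \<epsilon> where \<epsilon>: "\<epsilon> > 0" "ball a \<epsilon> \<subseteq> U" using U(1) a open_contains_ball by blast
  have G0: "\<forall>s\<in>ball a \<epsilon>. G s = 0" using \<epsilon> gU Gpsi by auto
  define tp :: "complex ^ 'n" where "tp = (\<chi> k. p (Inl k))"
  have "\<forall>t\<in>UNIV. G t = 0"
    by (rule identity_theorem_connected[OF connected_UNIV G_holo _ \<epsilon>(1)]) (use G0 in auto)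
  then have "G tp = 0" by blast
  moreover have "G tp = g p" unfolding G_def
    by (rule zpoly_agree[OF g]) (auto simp: \<phi>_def tp_def)
  ultimately show "g p = 0" by simp
qed

text \<open>Clearing the denominator \<alpha>D with alg_bounded_divides reduces this to
  alg_bounded_of_power.\<close>

lemma alg_bounded_radical:
  assumes T: "finite T" "T \<subseteq> X" "X \<subseteq> I" and dom: "zdomain I V" and V: "V \<noteq> {}"
    and indT: "alg_indep V T" and coords: "\<forall>c\<in>X. alg_bounded V T (\<lambda>p. p c)"
    and \<alpha>: "\<alpha>N \<in> zpoly X" "\<alpha>D \<in> zpoly X" "\<exists>p\<in>V. \<alpha>D p \<noteq> 0"
    and e: "e \<ge> 1" and rel: "\<forall>p\<in>V. f p ^ e * \<alpha>D p = \<alpha>N p"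
  shows "alg_bounded V T f"
proof -
  have TI: "T \<subseteq> I" using T by blast
  have "alg_bounded V T \<alpha>D" by (rule alg_bounded_zpoly[OF \<alpha>(2) V dom TI]) (use coords in blast)
  then obtain L b where Lb: "L \<in> zpoly T" "\<exists>q. L q \<noteq> 0" "b \<in> zpoly X" "\<forall>p\<in>V. L p = \<alpha>D p * b p"
    using alg_bounded_divides[OF T dom V \<alpha>(2) _ \<alpha>(3)] by blast
  have rel': "\<forall>p\<in>V. L p * f p ^ e = b p * \<alpha>N p"
  proof
    fix p assume "p \<in> V"
    then show "L p * f p ^ e = b p * \<alpha>N p" using Lb(4) rel by (simp add: algebra_simps)
  qed
  have "alg_bounded V T (\<lambda>p. b p * \<alpha>N p)"
    by (rule alg_bounded_zpoly[OF zpoly.zpoly_mult[OF Lb(3) \<alpha>(1)] V dom TI]) (use coords in blast)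
  then show ?thesis
    by (rule alg_bounded_of_power[OF T(1) dom TI Lb(1) alg_indep_nonzero[OF indT Lb(1,2)] _ e rel'])
qed

lemma alg_bounded_tower_coords:
  fixes U :: "(complex ^ 'n) set"
  assumes U: "open U" "connected U" "U \<noteq> {}"
    and tower_exps: "\<forall>i<m. e i \<ge> 1"
    and tower_alpha_poly: "\<forall>i<m. \<alpha>N i \<in> zpoly (tower_idx i) \<and> \<alpha>D i \<in> zpoly (tower_idx i)"
    and tower_alpha_den: "\<forall>i<m. \<forall>t\<in>U. \<alpha>D i (psi m \<delta> t) \<noteq> 0"
    and tower_rel: "\<forall>i<m. \<forall>t\<in>U. (\<delta> i t) ^ (e i) = \<alpha>N i (psi m \<delta> t) / \<alpha>D i (psi m \<delta> t)"
    and tower_holo: "\<forall>i<m. mholo_on U (\<delta> i)"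
  defines "V \<equiv> zclosure (tower_idx m) (psi m \<delta> ` U)"
  shows "\<forall>c\<in>tower_idx m. alg_bounded V (range Inl) (\<lambda>p. p c)"
proof -
  let ?I = "tower_idx m :: ('n + nat) set"
  let ?T = "range Inl :: ('n + nat) set"
  have dom: "zdomain ?I V" unfolding V_def
    by (rule zirreducible_imp_zdomain[OF zirreducible_zclosure_psi[OF U(3) zdomain_psi_image[OF U(1,2) tower_holo]]])
  have sub: "psi m \<delta> ` U \<subseteq> V" unfolding V_def by (rule zclosure_superset)
  have V: "V \<noteq> {}" using U(3) sub by blast
  have indT: "alg_indep V ?T" unfolding V_def by (rule alg_indep_params[OF U(1,3)])
  have "\<forall>c\<in>tower_idx i. alg_bounded V ?T (\<lambda>p. p c)" if "i \<le> m" for i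
    using that
  proof (induction i)
    case 0
    show ?case unfolding tower_idx_0 by (auto intro: alg_bounded_var[OF V])
  next
    case (Suc i)
    then have i: "i < m" and IH: "\<forall>c\<in>tower_idx i. alg_bounded V ?T (\<lambda>p. p c)" by auto
    have \<alpha>: "\<alpha>N i \<in> zpoly (tower_idx i)" "\<alpha>D i \<in> zpoly (tower_idx i)" using tower_alpha_poly i by auto
    have "p (Inr i) ^ e i * \<alpha>D i p - \<alpha>N i p = 0" if "p \<in> V" for p
      using that unfolding V_def
    proof (rule zclosure_vanishing[rotated 3])
      show "(\<lambda>p. p (Inr i) ^ e i * \<alpha>D i p - \<alpha>N i p) \<in> zpoly ?I"
        using \<alpha> tower_idx_mono[of i m] i
        by (intro zpoly_minus zpoly.zpoly_mult zpoly_pow zpoly.zpoly_var)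
          (auto intro: zpoly_mono simp: tower_idx_def)
      show "\<forall>q\<in>psi m \<delta> ` U. q (Inr i) ^ e i * \<alpha>D i q - \<alpha>N i q = 0"
      proof
        fix q assume "q \<in> psi m \<delta> ` U"
        then obtain t where t: "t \<in> U" "q = psi m \<delta> t" by blast
        have "\<delta> i t ^ e i = \<alpha>N i q / \<alpha>D i q" "\<alpha>D i q \<noteq> 0"
          using tower_rel tower_alpha_den i t by auto
        then show "q (Inr i) ^ e i * \<alpha>D i q - \<alpha>N i q = 0" using t i by (simp add: field_simps)
      qed
    qed (use psi_cspace in blast)
    then have rel: "\<forall>p\<in>V. p (Inr i) ^ e i * \<alpha>D i p = \<alpha>N i p" by simp
    have den: "\<exists>p\<in>V. \<alpha>D i p \<noteq> 0" using U(3) sub tower_alpha_den i by blast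
    have idx: "?T \<subseteq> tower_idx i" "tower_idx i \<subseteq> ?I"
      using tower_idx_mono[of i m] i by (auto simp: tower_idx_def)
    have "alg_bounded V ?T (\<lambda>p. p (Inr i))"
      by (rule alg_bounded_radical[OF _ idx dom V indT IH \<alpha> den _ rel]) (use tower_exps i in auto)
    then show ?case unfolding tower_idx_Suc using IH by blast
  qed
  then show ?thesis by blast
qed

text \<open>The k-th set of the chain is the closure of the image of the slice of a polydisc in which
  only the first k parameters vary; the (k+1)-st parameter minus its centre value separates
  consecutive sets.\<close>

lemma zchain_tower:
  fixes U :: "(complex ^ 'n) set"
  assumes U: "open U" "U \<noteq> {}" and holo: "\<forall>i<m. mholo_on U (\<delta> i)"
  shows "zchain (tower_idx m) (zclosure (tower_idx m) (psi m \<delta> ` U)) CARD('n)"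
proof -
  let ?I = "tower_idx m :: ('n + nat) set"
  obtain a where a: "a \<in> U" using U(2) by blast
  obtain r where r: "r > 0" "polydisc a r \<subseteq> U" using open_contains_polydisc[OF U(1) a] by blast
  obtain h where h: "bij_betw h (UNIV :: 'n set) {0..<card (UNIV :: 'n set)}"
    using ex_bij_betw_finite_nat[of "UNIV :: 'n set"] by auto
  define J where "J k = {j. h j < k}" for k
  define Zc where "Zc k = zclosure ?I (psi m \<delta> ` polydisc_slice a r a (J k))" for k
  have a_slice: "a \<in> polydisc_slice a r a K" for K using r unfolding polydisc_slice_def by simp
  show ?thesis unfolding zchain_def
  proof (rule exI[of _ Zc], intro conjI allI impI)
    fix i assume "i \<le> CARD('n)"
    show "zirreducible ?I (Zc i)"
      unfolding Zc_def by (rule zirreducible_zclosure_psi) (use a_slice zdomain_psi_slice[OF U(1) r(2) r(1) holo] in auto)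
    show "Zc i \<subseteq> zclosure ?I (psi m \<delta> ` U)"
      unfolding Zc_def by (rule zclosure_mono) (use polydisc_slice_subset[OF center_in_polydisc[OF r(1)]] r(2) in blast)
  next
    fix i assume i: "i < CARD('n)"
    have sub: "Zc i \<subseteq> Zc (Suc i)" unfolding Zc_def
      by (intro zclosure_mono image_mono polydisc_slice_mono r(1)) (auto simp: J_def)
    obtain j0 where j0: "h j0 = i" using h i unfolding bij_betw_def by (metis atLeastLessThan_iff imageE le0)
    define g where "g p = p (Inl j0) - a $ j0" for p :: "'n + nat \<Rightarrow> complex"
    have gI: "g \<in> zpoly ?I" unfolding g_def[abs_def]
      by (intro zpoly_minus zpoly.zpoly_var zpoly.zpoly_const) (auto simp: tower_idx_def)
    have g_vanishes: "\<forall>p\<in>Zc i. g p = 0"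
    proof
      fix p assume p: "p \<in> Zc i"
      show "g p = 0"
      proof (rule zclosure_vanishing[OF _ gI _ p[unfolded Zc_def]])
        show "psi m \<delta> ` polydisc_slice a r a (J i) \<subseteq> cspace ?I" using psi_cspace by blast
        show "\<forall>p\<in>psi m \<delta> ` polydisc_slice a r a (J i). g p = 0"
          using j0 unfolding g_def polydisc_slice_def J_def by auto
      qed
    qed
    define t1 where "t1 = vupd a j0 (a $ j0 + of_real (r / 2))"
    have t1_slice: "t1 \<in> polydisc_slice a r a (J (Suc i))"
      unfolding polydisc_slice_def J_def t1_def using r(1) j0 by (auto simp: dist_norm)
    have "psi m \<delta> t1 \<in> Zc (Suc i)" unfolding Zc_def using t1_slice zclosure_superset by blast
    moreover have "g (psi m \<delta> t1) \<noteq> 0" unfolding g_def t1_def using r(1) by simp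
    ultimately have "Zc (Suc i) \<noteq> Zc i" using g_vanishes by blast
    then show "Zc i \<subset> Zc (Suc i)" using sub by blast
  qed
qed

lemma phi_cspace:
  fixes t :: "complex ^ 'n"
  shows "phi m r \<delta> xN xD t \<in> cspace (inc_idx m r)"
  unfolding cspace_def
proof (intro CollectI allI impI)
  fix c :: "('n + nat) + nat" assume c: "c \<notin> inc_idx m r"
  show "phi m r \<delta> xN xD t c = 0"
  proof (cases c)
    case (Inl a)
    then have "a \<notin> tower_idx m" using c unfolding inc_idx_def by auto
    then show ?thesis using Inl psi_cspace[of m \<delta> t] unfolding phi_def cspace_def by auto
  next
    case (Inr j)
    then have "\<not> j < r" using c unfolding inc_idx_def by auto
    then show ?thesis using Inr unfolding phi_def by auto
  qed
qed

lemma pistar_phi: "pistar (phi m r \<delta> xN xD t) = psi m \<delta> t"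
  unfolding pistar_def phi_def by simp

lemma pistar_zclosure_subset:
  assumes B: "B \<subseteq> cspace (inc_idx m r)" and piB: "pistar ` B \<subseteq> cspace (tower_idx m)"
  shows "pistar ` zclosure (inc_idx m r) B \<subseteq> zclosure (tower_idx m) (pistar ` B)"
proof -
  let ?I = "tower_idx m :: ('n + nat) set" and ?J = "inc_idx m r :: (('n + nat) + nat) set"
  obtain F where F: "F \<subseteq> zpoly ?I" "zclosure ?I (pistar ` B) = {q \<in> cspace ?I. \<forall>f\<in>F. f q = 0}"
    using zclosed_zclosure[OF piB] unfolding zclosed_def by blast
  define F' where "F' = (\<lambda>f p. f (pistar p)) ` F"
  have "F' \<subseteq> zpoly ?J"
  proof
    fix f' assume "f' \<in> F'"
    then obtain f where f: "f \<in> F" "f' = (\<lambda>p. f (\<lambda>a. p (Inl a)))" unfolding F'_def pistar_def by blast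
    have "(\<lambda>p. f (\<lambda>a. (\<lambda>a p. p (Inl a)) a p)) \<in> zpoly ?J"
      by (rule zpoly_comp) (use f F in \<open>auto intro: zpoly.zpoly_var simp: inc_idx_def\<close>)
    then show "f' \<in> zpoly ?J" using f(2) by simp
  qed
  then have closed: "zclosed ?J {p \<in> cspace ?J. \<forall>f'\<in>F'. f' p = 0}" by (rule zclosed_vanishing_set)
  have "B \<subseteq> {p \<in> cspace ?J. \<forall>f'\<in>F'. f' p = 0}"
    using B F(2) zclosure_superset[of "pistar ` B" ?I] unfolding F'_def by blast
  then have sub: "zclosure ?J B \<subseteq> {p \<in> cspace ?J. \<forall>f'\<in>F'. f' p = 0}" by (rule zclosure_least[OF closed])
  show ?thesis
  proof
    fix q assume "q \<in> pistar ` zclosure ?J B"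
    then obtain p where p: "p \<in> zclosure ?J B" "q = pistar p" by blast
    then have "p \<in> cspace ?J" "\<forall>f\<in>F. f q = 0" using sub unfolding F'_def by auto
    then have "q \<in> cspace ?I" "\<forall>f\<in>F. f q = 0"
      using p(2) unfolding cspace_def pistar_def inc_idx_def by auto
    then show "q \<in> zclosure ?I (pistar ` B)" unfolding F(2) by blast
  qed
qed

lemma zclosure_pistar_incidence:
  fixes U :: "(complex ^ 'n) set"
  shows "zclosure (tower_idx m) (psi m \<delta> ` U)
           = zclosure (tower_idx m) (pistar ` zclosure (inc_idx m r) (phi m r \<delta> xN xD ` U))"
    (is "zclosure ?I ?A = zclosure ?I (pistar ` zclosure ?J ?B)")
proof
  have img: "pistar ` ?B = ?A" by (simp add: image_image pistar_phi)
  then show "zclosure ?I ?A \<subseteq> zclosure ?I (pistar ` zclosure ?J ?B)"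
    by (intro zclosure_mono) (use zclosure_superset[of ?B ?J] in blast)
  have A: "?A \<subseteq> cspace ?I" using psi_cspace by blast
  have B: "?B \<subseteq> cspace ?J" using phi_cspace by blast
  have "pistar ` zclosure ?J ?B \<subseteq> zclosure ?I ?A"
    using pistar_zclosure_subset[OF B] A unfolding img by blast
  then show "zclosure ?I (pistar ` zclosure ?J ?B) \<subseteq> zclosure ?I ?A"
    by (rule zclosure_least[OF zclosed_zclosure[OF A]])
qed

lemma has_zdim_tower:
  fixes U :: "(complex ^ 'n) set"
  assumes U: "open U" "connected U" "U \<noteq> {}"
    and tower_exps: "\<forall>i<m. e i \<ge> 1"
    and tower_alpha_poly: "\<forall>i<m. \<alpha>N i \<in> zpoly (tower_idx i) \<and> \<alpha>D i \<in> zpoly (tower_idx i)"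
    and tower_alpha_den: "\<forall>i<m. \<forall>t\<in>U. \<alpha>D i (psi m \<delta> t) \<noteq> 0"
    and tower_rel: "\<forall>i<m. \<forall>t\<in>U. (\<delta> i t) ^ (e i) = \<alpha>N i (psi m \<delta> t) / \<alpha>D i (psi m \<delta> t)"
    and tower_holo: "\<forall>i<m. mholo_on U (\<delta> i)"
  shows "has_zdim (tower_idx m) (zclosure (tower_idx m) (psi m \<delta> ` U)) CARD('n)"
proof -
  let ?I = "tower_idx m :: ('n + nat) set"
  let ?V = "zclosure ?I (psi m \<delta> ` U)"
  let ?T = "range Inl :: ('n + nat) set"
  have dom: "zdomain ?I ?V"
    by (rule zirreducible_imp_zdomain[OF zirreducible_zclosure_psi[OF U(3) zdomain_psi_image[OF U(1,2) tower_holo]]])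
  have V: "?V \<noteq> {}" using U(3) zclosure_superset by blast
  have coords: "\<forall>c\<in>?I. alg_bounded ?V ?T (\<lambda>p. p c)"
    by (rule alg_bounded_tower_coords[OF U tower_exps tower_alpha_poly tower_alpha_den tower_rel tower_holo])
  have "?T \<subseteq> ?I" unfolding tower_idx_def by auto
  then have bound: "\<forall>S. S \<subseteq> ?I \<longrightarrow> alg_indep ?V S \<longrightarrow> card S \<le> CARD('n)"
    using alg_indep_card_le[OF finite_tower_idx _ dom V coords] by (auto simp: card_image)
  have "\<not> zchain ?I ?V (Suc CARD('n))"
  proof
    assume "zchain ?I ?V (Suc CARD('n))"
    from zchain_length_le[OF finite_tower_idx this bound] show False by simp
  qed
  then show ?thesis
    unfolding has_zdim_def using zchain_tower[OF U(1,3) tower_holo] by blast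
qed

theorem theorem4p6:
  fixes U :: "(complex ^ 'n) set"
    and m r :: nat
    and e :: "nat \<Rightarrow> nat"
    and \<alpha>N \<alpha>D xN xD :: "nat \<Rightarrow> ('n + nat \<Rightarrow> complex) \<Rightarrow> complex"
    and \<delta> :: "nat \<Rightarrow> complex ^ 'n \<Rightarrow> complex"
  assumes U: "open U" "connected U" "U \<noteq> {}"
    and tower_exps: "\<forall>i<m. e i \<ge> 1"
    and tower_alpha_poly: "\<forall>i<m. \<alpha>N i \<in> zpoly (tower_idx i) \<and> \<alpha>D i \<in> zpoly (tower_idx i)"
    and tower_alpha_den: "\<forall>i<m. \<forall>t\<in>U. \<alpha>D i (psi m \<delta> t) \<noteq> 0"
    and tower_rel: "\<forall>i<m. \<forall>t\<in>U. (\<delta> i t) ^ (e i) = \<alpha>N i (psi m \<delta> t) / \<alpha>D i (psi m \<delta> t)"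
    and tower_holo: "\<forall>i<m. mholo_on U (\<delta> i)"
    and r_gt: "r > CARD('n)"
    and x_poly: "\<forall>j<r. xN j \<in> zpoly (tower_idx m) \<and> xD j \<in> zpoly (tower_idx m)"
    and x_den: "\<forall>j<r. \<forall>t\<in>U. xD j (psi m \<delta> t) \<noteq> 0"
    and jacobian_rank: "\<exists>t\<in>U. \<exists>\<sigma> :: 'n \<Rightarrow> nat. (\<forall>k. \<sigma> k < r) \<and>
        det (\<chi> k l. mpderiv (radpar_x m \<delta> xN xD (\<sigma> k)) l t) \<noteq> 0"
  shows "zirreducible (tower_idx m) (zclosure (tower_idx m) (psi m \<delta> ` U))
       \<and> has_zdim (tower_idx m) (zclosure (tower_idx m) (psi m \<delta> ` U)) CARD('n)
       \<and> zclosure (tower_idx m) (psi m \<delta> ` U)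
           = zclosure (tower_idx m) (pistar ` zclosure (inc_idx m r) (phi m r \<delta> xN xD ` U))"
proof (intro conjI)
  show "zirreducible (tower_idx m) (zclosure (tower_idx m) (psi m \<delta> ` U))"
    by (rule zirreducible_zclosure_psi[OF U(3) zdomain_psi_image[OF U(1,2) tower_holo]])
  show "has_zdim (tower_idx m) (zclosure (tower_idx m) (psi m \<delta> ` U)) CARD('n)"
    by (rule has_zdim_tower[OF U tower_exps tower_alpha_poly tower_alpha_den tower_rel tower_holo])
qed (rule zclosure_pistar_incidence)

end
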